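(* Let $n\ge4$. Every folded ribbon $n$-stick unknot $\mathcal{U}_{w,F}$ whose diagram $\mathcal{U}$ is a non-degenerate $n$-gon with all fold (interior) angles $\alpha_i$ satisfying $\frac{\pi}{2}\le\alpha_i<\pi$ has $\operatorname{Rib}(\mathcal{U}_{w,F})\ge n\cot(\frac{\pi}{n})$. Thus the minimum folded ribbonlength of such unknots is bounded below by $n\cot(\frac{\pi}{n})$, and the minimum occurs when $\mathcal{U}$ is a regular $n$-gon.
   Context: Non-degenerate $n$-gon: side lengths nonzero, interior angles not equal to $\pi$. For width $w>0$, the folded ribbon $\mathcal{U}_{w,F}$ is a flat strip of width $w$ centred on $\mathcal{U}$ (boundary parallel to and at distance $w/2$ from each edge), folded at each vertex along a fold line through the vertex perpendicular to the bisector of the angle there; it is a piecewise-linear immersion of an annulus or Möbius band into the plane whose only singularities are the pairwise disjoint fold lines, with consistent crossing information; $F$ is the folding information (which layer lies on top at each fold). The folded ribbonlength is $\operatorname{Rib}(\mathcal{U}_{w,F})=\operatorname{Len}(\mathcal{U})/w$. *)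

theory Defs
  imports "HOL-Analysis.Analysis"
begin

text \<open>A closed polygon (n-gon) in the plane, points represented as complex numbers.
  The vertices are P 0, ..., P (n-1); indices are taken modulo n.\<close>

definition vtx :: "nat \<Rightarrow> (nat \<Rightarrow> complex) \<Rightarrow> nat \<Rightarrow> complex" where
  "vtx n P i = P (i mod n)"

definition nxt :: "nat \<Rightarrow> (nat \<Rightarrow> complex) \<Rightarrow> nat \<Rightarrow> complex" where
  "nxt n P i = P ((i + 1) mod n)"

definition prv :: "nat \<Rightarrow> (nat \<Rightarrow> complex) \<Rightarrow> nat \<Rightarrow> complex" where
  "prv n P i = P ((i + n - 1) mod n)"

definition edge :: "nat \<Rightarrow> (nat \<Rightarrow> complex) \<Rightarrow> nat \<Rightarrow> complex set" where
  "edge n P i = closed_segment (vtx n P i) (nxt n P i)"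

definition polygon_length :: "nat \<Rightarrow> (nat \<Rightarrow> complex) \<Rightarrow> real" where
  "polygon_length n P = (\<Sum>i<n. cmod (nxt n P i - vtx n P i))"

definition simple_polygon :: "nat \<Rightarrow> (nat \<Rightarrow> complex) \<Rightarrow> bool" where
  "simple_polygon n P \<longleftrightarrow> n \<ge> 3 \<and>
     (\<forall>i<n. \<forall>j<n. i \<noteq> j \<longrightarrow>
        (if j = (i + 1) mod n then edge n P i \<inter> edge n P j = {vtx n P j}
         else if i = (j + 1) mod n then edge n P i \<inter> edge n P j = {vtx n P i}
         else edge n P i \<inter> edge n P j = {}))"

text \<open>Signed area (positive iff the polygon is traversed counterclockwise).\<close>
definition signed_area :: "nat \<Rightarrow> (nat \<Rightarrow> complex) \<Rightarrow> real" where
  "signed_area n P = (\<Sum>i<n. Im (cnj (vtx n P i) * nxt n P i)) / 2"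

definition turn_angle :: "nat \<Rightarrow> (nat \<Rightarrow> complex) \<Rightarrow> nat \<Rightarrow> real" where
  "turn_angle n P i = Arg ((nxt n P i - vtx n P i) / (vtx n P i - prv n P i))"

text \<open>Interior angle at vertex i of a simple polygon (measured on the side of the
  bounded region), in (0, 2 pi).\<close>
definition interior_angle :: "nat \<Rightarrow> (nat \<Rightarrow> complex) \<Rightarrow> nat \<Rightarrow> real" where
  "interior_angle n P i = pi - sgn (signed_area n P) * turn_angle n P i"

definition nondegenerate_polygon :: "nat \<Rightarrow> (nat \<Rightarrow> complex) \<Rightarrow> bool" where
  "nondegenerate_polygon n P \<longleftrightarrow> n \<ge> 3 \<and>
     (\<forall>i<n. nxt n P i \<noteq> vtx n P i \<and> interior_angle n P i \<noteq> pi)"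

text \<open>Fold line at vertex i of the folded ribbon of width w: the segment through the
  vertex, perpendicular to the bisector of the angle there, cut off by the two ribbon
  boundaries (which lie at distance w/2 from the edges); its half-length is
  (w/2) / cos(alpha_i/2).\<close>
definition bisector_dir :: "nat \<Rightarrow> (nat \<Rightarrow> complex) \<Rightarrow> nat \<Rightarrow> complex" where
  "bisector_dir n P i = sgn (nxt n P i - vtx n P i) + sgn (prv n P i - vtx n P i)"

definition fold_line :: "nat \<Rightarrow> (nat \<Rightarrow> complex) \<Rightarrow> real \<Rightarrow> nat \<Rightarrow> complex set" where
  "fold_line n P w i =
     (let d = \<i> * sgn (bisector_dir n P i);
          h = (w / 2) / cos (interior_angle n P i / 2)
      in closed_segment (vtx n P i - of_real h * d) (vtx n P i + of_real h * d))"

text \<open>The folded ribbon of width w on the polygon is a valid folded ribbon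
  (its only singularities are pairwise disjoint fold lines).\<close>
definition folded_ribbon :: "nat \<Rightarrow> (nat \<Rightarrow> complex) \<Rightarrow> real \<Rightarrow> bool" where
  "folded_ribbon n P w \<longleftrightarrow> w > 0 \<and>
     (\<forall>i<n. \<forall>j<n. i \<noteq> j \<longrightarrow> fold_line n P w i \<inter> fold_line n P w j = {})"

definition ribbonlength :: "nat \<Rightarrow> (nat \<Rightarrow> complex) \<Rightarrow> real \<Rightarrow> real" where
  "ribbonlength n P w = polygon_length n P / w"

definition regular_polygon :: "nat \<Rightarrow> (nat \<Rightarrow> complex) \<Rightarrow> bool" where
  "regular_polygon n P \<longleftrightarrow>
     (\<exists>c r \<theta>. r > 0 \<and> (\<forall>k. P k = c + of_real r * cis (\<theta> + 2 * pi * real k / real n)))"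

end

theory Submission
  imports Defs
begin

text \<open>With \<open>s\<close> the orientation sign, interior angles in \<open>[pi/2, pi)\<close> mean that every signed
  turn \<open>s * \<tau>\<^sub>i\<close> lies in \<open>(0, pi/2]\<close>. For a simple polygon these turns add up to \<open>2 pi\<close>:
  the sum is a multiple of \<open>2 pi\<close>, and were it \<open>4 pi\<close> or more, the height function of a
  suitably rotated copy would have two peaks. Below the lowest peak the two chains leaving it
  trap a chain climbing to the other peak, which by an intermediate value argument must meet
  one of them, contradicting simplicity.

  Disjointness of the fold lines at both ends of edge \<open>i\<close> forces its length to exceed
  \<open>w/2 * (cot (s \<tau>\<^sub>i / 2) + cot (s \<tau>\<^sub>i\<^sub>+\<^sub>1 / 2))\<close>. Summing, and using Jensen's inequality for
  the convex function \<open>cot\<close> together with \<open>\<Sum> s \<tau>\<^sub>i / 2 = pi\<close>, gives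
  \<open>Len \<ge> w * n * cot (pi / n)\<close>. For the regular \<open>n\<close>-gon the fold lines lie on the tangents
  of the circumcircle, which stay disjoint as long as \<open>w < 2 sin (pi / n) tan (pi / n)\<close>; as
  \<open>w\<close> tends to this bound the ribbonlength tends to \<open>n cot (pi / n)\<close>.\<close>

section \<open>Curves parametrised by height\<close>

lemma pos_if_nonvanishing:
  fixes f :: "real \<Rightarrow> real"
  assumes cont: "continuous_on {a..b} f" and nz: "\<forall>z\<in>{a..b}. f z \<noteq> 0"
    and xy: "x \<in> {a..b}" "y \<in> {a..b}" and "0 < f x"
  shows "0 < f y"
proof (rule ccontr)
  assume "\<not> 0 < f y"
  obtain z where "z \<in> {a..b}" "f z = 0"
  proof (cases "y \<le> x")
    case True
    have "continuous_on {y..x} f" by (rule continuous_on_subset[OF cont]) (use xy in auto)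
    then obtain z where "y \<le> z" "z \<le> x" "f z = 0"
      using IVT'[of f y 0 x] True \<open>\<not> 0 < f y\<close> \<open>0 < f x\<close> by auto
    then show ?thesis using that[of z] xy by auto
  next
    case False
    have "continuous_on {x..y} f" by (rule continuous_on_subset[OF cont]) (use xy False in auto)
    then obtain z where "x \<le> z" "z \<le> y" "f z = 0"
      using IVT2'[of f y 0 x] False \<open>\<not> 0 < f y\<close> \<open>0 < f x\<close> by auto
    then show ?thesis using that[of z] xy by auto
  qed
  then show False using nz by auto
qed

lemma nonneg_if_no_interior_zero:
  fixes f :: "real \<Rightarrow> real"
  assumes cont: "continuous_on {a..b} f" and nz: "\<forall>y\<in>{a<..<b}. f y \<noteq> 0"
    and y0: "y0 \<in> {a<..<b}" "f y0 > 0" and y: "y \<in> {a..b}"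
  shows "f y \<ge> 0"
proof -
  have "0 < f x" if x: "x \<in> {a<..<b}" for x
  proof (rule pos_if_nonvanishing[of "min x y0" "max x y0" f y0 x])
    show "continuous_on {min x y0..max x y0} f"
      by (rule continuous_on_subset[OF cont]) (use x y0 in auto)
    show "\<forall>z\<in>{min x y0..max x y0}. f z \<noteq> 0"
      using nz x y0 by (auto simp: min_def max_def split: if_splits)
  qed (use x y0 in auto)
  moreover have "y \<in> closure {a<..<b}" using y y0 by simp
  ultimately show ?thesis
    using continuous_ge_on_closure[of "{a<..<b}" f y 0] cont y0 by fastforce
qed

text \<open>The horizontal gaps from \<open>R\<close> to \<open>L\<close> and to \<open>I\<close> keep the sign they have somewhere
  inside, so the gap between \<open>I\<close> and \<open>L\<close> would have to change sign between the bottom,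
  where \<open>I\<close> meets \<open>R\<close>, and the top, where \<open>L\<close> meets \<open>R\<close>.\<close>
lemma trapped_curve_meets:
  fixes R L I :: "real \<Rightarrow> complex" and \<epsilon> :: real
  assumes "\<epsilon> \<noteq> 0"
    and cont: "continuous_on {lo..hi} R" "continuous_on {lo..hi} L" "continuous_on {lo..hi} I"
    and height: "\<forall>y\<in>{lo..hi}. Im (R y) = y \<and> Im (L y) = y \<and> Im (I y) = y"
    and top: "R hi = L hi" and bottom: "R lo = I lo"
    and RL: "\<forall>y\<in>{lo<..<hi}. R y \<noteq> L y" and RI: "\<forall>y\<in>{lo<..<hi}. R y \<noteq> I y"
    and p: "p \<in> {lo<..<hi}" "\<epsilon> * Re (L p) < \<epsilon> * Re (R p)"
    and q: "q \<in> {lo<..<hi}" "\<epsilon> * Re (I q) < \<epsilon> * Re (R q)"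
  shows "\<exists>y\<in>{lo..hi}. L y = I y"
proof (rule ccontr)
  assume LI: "\<not> (\<exists>y\<in>{lo..hi}. L y = I y)"
  have same_height: "A y = B y \<longleftrightarrow> \<epsilon> * Re (A y - B y) = 0"
    if "y \<in> {lo..hi}" "A \<in> {R, L, I}" "B \<in> {R, L, I}" for A B y
    using that height \<open>\<epsilon> \<noteq> 0\<close> by (auto simp: complex_eq_iff)
  have cont_diff: "continuous_on {lo..hi} (\<lambda>y. \<epsilon> * Re (A y - B y))"
    if "A \<in> {R, L, I}" "B \<in> {R, L, I}" for A B
    using that cont by (auto intro!: continuous_intros)
  define dRL dRI dIL where "dRL y = \<epsilon> * Re (R y - L y)" and "dRI y = \<epsilon> * Re (R y - I y)"
    and "dIL y = \<epsilon> * Re (I y - L y)" for y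
  have "lo < hi" using p by simp
  have "0 \<le> dRL lo"
  proof (rule nonneg_if_no_interior_zero[where f = dRL, OF _ _ p(1)])
    show "continuous_on {lo..hi} dRL" unfolding dRL_def by (rule cont_diff) auto
    show "\<forall>y\<in>{lo<..<hi}. dRL y \<noteq> 0" using RL same_height unfolding dRL_def by auto
  qed (use p \<open>lo < hi\<close> in \<open>auto simp: dRL_def algebra_simps\<close>)
  moreover have "0 \<le> dRI hi"
  proof (rule nonneg_if_no_interior_zero[where f = dRI, OF _ _ q(1)])
    show "continuous_on {lo..hi} dRI" unfolding dRI_def by (rule cont_diff) auto
    show "\<forall>y\<in>{lo<..<hi}. dRI y \<noteq> 0" using RI same_height unfolding dRI_def by auto
  qed (use q \<open>lo < hi\<close> in \<open>auto simp: dRI_def algebra_simps\<close>)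
  moreover have "dRL lo = dIL lo" "dRI hi = - dIL hi"
    unfolding dRL_def dRI_def dIL_def top bottom by (simp_all add: algebra_simps)
  moreover have dIL_nz: "\<forall>y\<in>{lo..hi}. dIL y \<noteq> 0"
    using same_height[of _ I L] LI unfolding dIL_def by (metis insertI1 insertI2)
  moreover have "continuous_on {lo..hi} dIL" unfolding dIL_def by (rule cont_diff) auto
  then have "0 < dIL lo \<Longrightarrow> 0 < dIL hi"
    using pos_if_nonvanishing[OF _ dIL_nz, of lo hi] \<open>lo < hi\<close> by auto
  ultimately show False using \<open>lo < hi\<close> by fastforce
qed

section \<open>Height-monotone chains\<close>

definition monotone_chain :: "(nat \<Rightarrow> complex) \<Rightarrow> real \<Rightarrow> nat \<Rightarrow> nat \<Rightarrow> bool" where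
  "monotone_chain v \<sigma> s t \<longleftrightarrow>
     (\<sigma> = 1 \<or> \<sigma> = -1) \<and> (\<forall>j\<in>{s..<t}. \<sigma> * Im (v (Suc j) - v j) > 0)"

text \<open>Each edge contributes the fraction of it that lies on the near side of height \<open>y\<close>,
  clamped to \<open>[0, 1]\<close>; this makes continuity in \<open>y\<close> immediate.\<close>
definition chain_at_height :: "(nat \<Rightarrow> complex) \<Rightarrow> nat \<Rightarrow> nat \<Rightarrow> real \<Rightarrow> complex" where
  "chain_at_height v s t y = v s + (\<Sum>j\<in>{s..<t}.
      of_real (max 0 (min 1 ((y - Im (v j)) / (Im (v (Suc j)) - Im (v j))))) * (v (Suc j) - v j))"

lemma continuous_on_chain_at_height: "continuous_on A (chain_at_height v s t)"
  unfolding chain_at_height_def divide_inverse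
  by (intro continuous_intros continuous_on_max continuous_on_min)

lemma monotone_chain_le:
  assumes "monotone_chain v \<sigma> s t" "s \<le> j" "j \<le> k" "k \<le> t"
  shows "\<sigma> * Im (v j) \<le> \<sigma> * Im (v k)"
  using assms(3,4)
proof (induction k)
  case (Suc k)
  show ?case
  proof (cases "j = Suc k")
    case False
    then have "\<sigma> * Im (v j) \<le> \<sigma> * Im (v k)" using Suc by simp
    moreover have "\<sigma> * Im (v (Suc k) - v k) > 0"
      using assms(1,2) Suc.prems False unfolding monotone_chain_def by auto
    ultimately show ?thesis by (simp add: algebra_simps)
  qed simp
qed simp

lemma monotone_chain_less:
  assumes "monotone_chain v \<sigma> s t" "s \<le> j" "j < k" "k \<le> t"
  shows "\<sigma> * Im (v j) < \<sigma> * Im (v k)"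
proof -
  obtain k' where k: "k = Suc k'" using assms(3) by (cases k) auto
  have "\<sigma> * Im (v j) \<le> \<sigma> * Im (v k')" using monotone_chain_le[OF assms(1,2)] assms k by auto
  moreover have "\<sigma> * Im (v (Suc k') - v k') > 0"
    using assms k unfolding monotone_chain_def by auto
  ultimately show ?thesis using k by (simp add: algebra_simps)
qed

lemma chain_at_height_eq:
  assumes mc: "monotone_chain v \<sigma> s t" and j0: "s \<le> j0" "j0 < t"
    and y: "\<sigma> * Im (v j0) \<le> \<sigma> * y" "\<sigma> * y \<le> \<sigma> * Im (v (Suc j0))"
  shows "chain_at_height v s t y =
    v j0 + of_real ((y - Im (v j0)) / (Im (v (Suc j0)) - Im (v j0))) * (v (Suc j0) - v j0)"
proof -
  define c where "c j = max 0 (min 1 ((y - Im (v j)) / (Im (v (Suc j)) - Im (v j))))" for j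
  have \<sigma>: "\<sigma> = 1 \<or> \<sigma> = -1" using mc unfolding monotone_chain_def by auto
  have up: "\<sigma> * (Im (v (Suc j)) - Im (v j)) > 0" if "s \<le> j" "j < t" for j
    using mc that unfolding monotone_chain_def by auto
  have below: "c j = 1" if "s \<le> j" "j < j0" for j
  proof -
    have "\<sigma> * Im (v (Suc j)) \<le> \<sigma> * Im (v j0)"
      using monotone_chain_le[OF mc, of "Suc j" j0] that j0 by auto
    then show ?thesis using \<sigma> up[of j] that j0 y unfolding c_def by (auto simp: field_simps)
  qed
  have above: "c j = 0" if "Suc j0 \<le> j" "j < t" for j
  proof -
    have "\<sigma> * Im (v (Suc j0)) \<le> \<sigma> * Im (v j)"
      using monotone_chain_le[OF mc, of "Suc j0" j] that j0 by auto
    then show ?thesis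
      using \<sigma> up[of j] that j0 y unfolding c_def by (auto simp: field_simps divide_le_0_iff)
  qed
  have at: "c j0 = (y - Im (v j0)) / (Im (v (Suc j0)) - Im (v j0))"
    using \<sigma> up[OF j0] y unfolding c_def by (auto simp: field_simps zero_le_divide_iff)
  have split: "{s..<t} = {s..<j0} \<union> {j0} \<union> {Suc j0..<t}" using j0 by auto
  have "(\<Sum>j\<in>{s..<t}. of_real (c j) * (v (Suc j) - v j)) =
        (\<Sum>j\<in>{s..<j0}. of_real (c j) * (v (Suc j) - v j)) + of_real (c j0) * (v (Suc j0) - v j0)
        + (\<Sum>j\<in>{Suc j0..<t}. of_real (c j) * (v (Suc j) - v j))"
    unfolding split by (subst sum.union_disjoint; auto)+
  also have "(\<Sum>j\<in>{s..<j0}. of_real (c j) * (v (Suc j) - v j)) = (\<Sum>j\<in>{s..<j0}. v (Suc j) - v j)"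
    by (rule sum.cong) (auto simp: below)
  also have "\<dots> = v j0 - v s" using sum_Suc_diff'[of s j0 v] j0 by simp
  also have "(\<Sum>j\<in>{Suc j0..<t}. of_real (c j) * (v (Suc j) - v j)) = 0"
    by (rule sum.neutral) (auto simp: above)
  finally show ?thesis unfolding chain_at_height_def c_def[symmetric] at by simp
qed

lemma monotone_chain_edge_at_height:
  assumes "monotone_chain v \<sigma> s t" "s < t" "\<sigma> * Im (v s) \<le> \<sigma> * y" "\<sigma> * y \<le> \<sigma> * Im (v t)"
  obtains j where "s \<le> j" "j < t" "\<sigma> * Im (v j) \<le> \<sigma> * y" "\<sigma> * y \<le> \<sigma> * Im (v (Suc j))"
  using assms
proof (induction t arbitrary: thesis)
  case (Suc t)
  show ?case
  proof (cases "s < t \<and> \<sigma> * y \<le> \<sigma> * Im (v t)")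
    case True
    have "monotone_chain v \<sigma> s t" using Suc.prems(2) unfolding monotone_chain_def by auto
    then show ?thesis using Suc.IH[OF Suc.prems(1)] True Suc.prems(4) by force
  next
    case False
    then have "s = t \<or> \<sigma> * Im (v t) \<le> \<sigma> * y" using Suc.prems(3) by auto
    then have "\<sigma> * Im (v t) \<le> \<sigma> * y" using Suc.prems(4) by auto
    then show ?thesis using Suc.prems(1)[of t] Suc.prems(3,5) by auto
  qed
qed simp

lemma
  assumes mc: "monotone_chain v \<sigma> s t" and "s < t"
    and y: "\<sigma> * Im (v s) \<le> \<sigma> * y" "\<sigma> * y \<le> \<sigma> * Im (v t)"
  shows Im_chain_at_height: "Im (chain_at_height v s t y) = y"
    and chain_at_height_on_edge:
      "\<exists>j\<in>{s..<t}. chain_at_height v s t y \<in> closed_segment (v j) (v (Suc j))"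
proof -
  obtain j where j: "s \<le> j" "j < t" "\<sigma> * Im (v j) \<le> \<sigma> * y" "\<sigma> * y \<le> \<sigma> * Im (v (Suc j))"
    using monotone_chain_edge_at_height[OF assms] .
  define r where "r = (y - Im (v j)) / (Im (v (Suc j)) - Im (v j))"
  have \<sigma>: "\<sigma> = 1 \<or> \<sigma> = -1" and up: "\<sigma> * (Im (v (Suc j)) - Im (v j)) > 0"
    using mc j unfolding monotone_chain_def by auto
  have eq: "chain_at_height v s t y = v j + of_real r * (v (Suc j) - v j)"
    unfolding r_def by (rule chain_at_height_eq[OF mc j])
  have "Im (v (Suc j)) - Im (v j) \<noteq> 0" using up by auto
  then show "Im (chain_at_height v s t y) = y" unfolding eq r_def by (simp add: field_simps)
  have "0 \<le> r" "r \<le> 1"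
    using \<sigma> up j(3,4) unfolding r_def by (auto simp: field_simps zero_le_divide_iff)
  then have "v j + of_real r * (v (Suc j) - v j) \<in> closed_segment (v j) (v (Suc j))"
    unfolding in_segment by (intro exI[of _ r]) (auto simp: scaleR_conv_of_real algebra_simps)
  then show "\<exists>j\<in>{s..<t}. chain_at_height v s t y \<in> closed_segment (v j) (v (Suc j))"
    using j unfolding eq by auto
qed

lemma chain_at_height_start:
  assumes "monotone_chain v \<sigma> s t" "s < t"
  shows "chain_at_height v s t (Im (v s)) = v s"
  using chain_at_height_eq[OF assms(1), of s "Im (v s)"] monotone_chain_le[OF assms(1), of s "Suc s"]
    assms by simp

lemma chain_at_height_end:
  assumes "monotone_chain v \<sigma> s t" "s < t"
  shows "chain_at_height v s t (Im (v t)) = v t"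
proof -
  obtain t' where t: "t = Suc t'" using assms by (cases t) auto
  have "\<sigma> * Im (v (Suc t') - v t') > 0" using assms t unfolding monotone_chain_def by auto
  then have "Im (v t) \<noteq> Im (v t')" using t by auto
  moreover have "\<sigma> * Im (v t') \<le> \<sigma> * Im (v t)" using monotone_chain_le[OF assms(1)] assms t by auto
  ultimately show ?thesis using chain_at_height_eq[OF assms(1), of t' "Im (v t)"] assms t by simp
qed

section \<open>Simple closed chains turning left have a single peak\<close>

definition simple_closed_chain :: "nat \<Rightarrow> (nat \<Rightarrow> complex) \<Rightarrow> bool" where
  "simple_closed_chain n v \<longleftrightarrow> (\<forall>i<n. \<forall>j<n. \<forall>z. i \<noteq> j \<longrightarrow>
     z \<in> closed_segment (v i) (v (Suc i)) \<longrightarrow> z \<in> closed_segment (v j) (v (Suc j)) \<longrightarrow>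
     (j = Suc i mod n \<and> z = v j) \<or> (i = Suc j mod n \<and> z = v i))"

lemma simple_closed_chain_runs_meet:
  assumes simple: "simple_closed_chain n v" and closed: "v n = v 0"
    and i: "s1 \<le> i" "i < t1" "t1 \<le> n" and j: "s2 \<le> j" "j < t2" "t2 \<le> n"
    and disjoint: "t1 \<le> s2 \<or> t2 \<le> s1"
    and z: "z \<in> closed_segment (v i) (v (Suc i))" "z \<in> closed_segment (v j) (v (Suc j))"
  shows "(t1 mod n = s2 \<and> z = v t1) \<or> (t2 mod n = s1 \<and> z = v t2)"
proof -
  have successor: "t mod n = s' \<and> z = v t"
    if "s \<le> k" "k < t" "t \<le> n" "s' \<le> l" "l < t'" "t' \<le> n" "t \<le> s' \<or> t' \<le> s"
      "l = Suc k mod n" "z = v l" for s k t s' l t'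
  proof (cases "Suc k < n")
    case True
    then have "l = Suc k" using that by simp
    then have "t = Suc k" using that by auto
    then show ?thesis using that True \<open>l = Suc k\<close> by simp
  next
    case False
    then have "Suc k = n" using that by simp
    then have "l = 0" "t = n" using that by auto
    then show ?thesis using that closed by auto
  qed
  have "i \<noteq> j" using i j disjoint by auto
  then have "(j = Suc i mod n \<and> z = v j) \<or> (i = Suc j mod n \<and> z = v i)"
    using simple z i j unfolding simple_closed_chain_def by auto
  then show ?thesis
    using successor[OF i j] successor[OF j i] disjoint by auto
qed

lemma chains_at_height_meet:
  assumes simple: "simple_closed_chain n v" and closed: "v n = v 0"
    and c1: "monotone_chain v \<sigma>1 s1 t1" "s1 < t1" "t1 \<le> n"
    and c2: "monotone_chain v \<sigma>2 s2 t2" "s2 < t2" "t2 \<le> n"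
    and disjoint: "t1 \<le> s2 \<or> t2 \<le> s1"
    and y1: "\<sigma>1 * Im (v s1) \<le> \<sigma>1 * y" "\<sigma>1 * y \<le> \<sigma>1 * Im (v t1)"
    and y2: "\<sigma>2 * Im (v s2) \<le> \<sigma>2 * y" "\<sigma>2 * y \<le> \<sigma>2 * Im (v t2)"
    and eq: "chain_at_height v s1 t1 y = chain_at_height v s2 t2 y"
  shows "(t1 mod n = s2 \<and> Im (v t1) = y) \<or> (t2 mod n = s1 \<and> Im (v t2) = y)"
proof -
  define z where "z = chain_at_height v s1 t1 y"
  obtain i where i: "i \<in> {s1..<t1}" "z \<in> closed_segment (v i) (v (Suc i))"
    using chain_at_height_on_edge[OF c1(1,2) y1] unfolding z_def by blast
  obtain j where j: "j \<in> {s2..<t2}" "z \<in> closed_segment (v j) (v (Suc j))"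
    using chain_at_height_on_edge[OF c2(1,2) y2] unfolding z_def eq by blast
  have "Im z = y" unfolding z_def by (rule Im_chain_at_height[OF c1(1,2) y1])
  then show ?thesis
    using simple_closed_chain_runs_meet[OF simple closed _ _ c1(3) _ _ c2(3) disjoint i(2) j(2)]
      i(1) j(1) by auto
qed

lemma left_turn_at_peak:
  fixes U V W z1 z2 :: complex
  assumes up: "Im (V - U) > 0" and down: "Im (W - V) < 0"
    and left: "Im ((W - V) * cnj (V - U)) > 0"
    and z: "z1 = U + of_real r1 * (V - U)" "z2 = V + of_real r2 * (W - V)"
    and y: "Im z1 = Im z2" "Im z1 < Im V"
  shows "Re z2 < Re z1"
proof -
  define a1 b1 a2 b2 where "a1 = Re (V - U)" "b1 = Im (V - U)" "a2 = Re (W - V)" "b2 = Im (W - V)"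
  have cross: "a1 * b2 - a2 * b1 > 0"
    using left unfolding a1_b1_a2_b2_def by (simp add: algebra_simps)
  have rest: "(1 - r1) * b1 > 0" and r2: "r2 * b2 = - (1 - r1) * b1"
    using y unfolding z a1_b1_a2_b2_def by (simp_all add: algebra_simps)
  have "(- b2) * (- (1 - r1) * a1 - r2 * a2) = (1 - r1) * (a1 * b2) + a2 * (r2 * b2)"
    by (simp add: algebra_simps)
  also have "\<dots> = (1 - r1) * (a1 * b2 - a2 * b1)" unfolding r2 by (simp add: algebra_simps)
  also have "\<dots> > 0" using rest cross up unfolding a1_b1_a2_b2_def by (simp add: zero_less_mult_iff)
  finally have "- (1 - r1) * a1 - r2 * a2 > 0"
    using down unfolding a1_b1_a2_b2_def by (simp add: zero_less_mult_iff)
  then show ?thesis unfolding z a1_b1_a2_b2_def by (simp add: algebra_simps)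
qed

lemma peak_witness:
  assumes up: "monotone_chain v 1 sI tI" "sI < tI" and down: "monotone_chain v (-1) sO tO" "sO < tO"
    and peak: "v tI = v sO" and left: "Im ((v (Suc sO) - v sO) * cnj (v tI - v (tI - 1))) > 0"
    and y: "Im (v (tI - 1)) < y" "Im (v (Suc sO)) < y" "y < Im (v sO)"
  shows "Re (chain_at_height v sO tO y) < Re (chain_at_height v sI tI y)"
proof (rule left_turn_at_peak)
  have tI: "Suc (tI - 1) = tI" using up(2) by simp
  show "chain_at_height v sI tI y = v (tI - 1) + of_real ((y - Im (v (tI - 1))) /
      (Im (v tI) - Im (v (tI - 1)))) * (v sO - v (tI - 1))"
    using chain_at_height_eq[OF up(1), of "tI - 1" y] up(2) y peak tI by simp
  show "chain_at_height v sO tO y = v sO + of_real ((y - Im (v sO)) /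
      (Im (v (Suc sO)) - Im (v sO))) * (v (Suc sO) - v sO)"
    using chain_at_height_eq[OF down(1), of sO y] down(2) y by simp
  have "Im (v sI) \<le> Im (v (tI - 1))" using monotone_chain_le[OF up(1), of sI "tI - 1"] up(2) by simp
  then have "Im (chain_at_height v sI tI y) = y"
    using Im_chain_at_height[OF up, of y] y peak by simp
  moreover have "Im (v tO) \<le> Im (v (Suc sO))"
    using monotone_chain_le[OF down(1), of "Suc sO" tO] down(2) by simp
  then have "Im (chain_at_height v sO tO y) = y"
    using Im_chain_at_height[OF down, of y] y by simp
  ultimately show "Im (chain_at_height v sI tI y) = Im (chain_at_height v sO tO y)"
    "Im (chain_at_height v sI tI y) < Im (v sO)" using y by simp_all
qed (use y peak left in simp_all)

lemma chain_at_height_uminus: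
  "chain_at_height (\<lambda>j. - v j) s t (- y) = - chain_at_height v s t y"
proof -
  have frac: "(- y - Im (- v j)) / (Im (- v (Suc j)) - Im (- v j)) =
        (y - Im (v j)) / (Im (v (Suc j)) - Im (v j))" for j
    by (simp add: divide_simps algebra_simps)
  show ?thesis unfolding chain_at_height_def frac by (simp add: sum_negf[symmetric] right_diff_distrib)
qed

lemma monotone_chain_uminus:
  "monotone_chain (\<lambda>j. - v j) (- \<sigma>) s t \<longleftrightarrow> monotone_chain v \<sigma> s t"
  unfolding monotone_chain_def by auto

lemma valley_witness:
  assumes down: "monotone_chain v (-1) sI tI" "sI < tI" and up: "monotone_chain v 1 sO tO" "sO < tO"
    and valley: "v tI = v sO" and left: "Im ((v (Suc sO) - v sO) * cnj (v tI - v (tI - 1))) > 0"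
    and y: "y < Im (v (tI - 1))" "y < Im (v (Suc sO))" "Im (v sO) < y"
  shows "Re (chain_at_height v sI tI y) < Re (chain_at_height v sO tO y)"
proof -
  have "Re (chain_at_height (\<lambda>j. - v j) sO tO (- y)) < Re (chain_at_height (\<lambda>j. - v j) sI tI (- y))"
  proof (rule peak_witness)
    show "monotone_chain (\<lambda>j. - v j) 1 sI tI" "monotone_chain (\<lambda>j. - v j) (-1) sO tO"
      using monotone_chain_uminus[of v "-1" sI tI] monotone_chain_uminus[of v 1 sO tO] down up
      by simp_all
    have "(- v (Suc sO) - - v sO) * cnj (- v tI - - v (tI - 1)) =
        (v (Suc sO) - v sO) * cnj (v tI - v (tI - 1))" by (simp add: algebra_simps)
    then show "Im ((- v (Suc sO) - - v sO) * cnj (- v tI - - v (tI - 1))) > 0" using left by simp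
  qed (use down up valley y in simp_all)
  then show ?thesis unfolding chain_at_height_uminus by simp
qed

lemma mod_add_right_cancel_nat: "((a::nat) + m) mod n = (b + m) mod n \<longleftrightarrow> a mod n = b mod n"
proof -
  have "int ((a + m) mod n) = int ((b + m) mod n) \<longleftrightarrow> int (a mod n) = int (b mod n)"
    by (simp add: of_nat_mod mod_eq_dvd_iff)
  then show ?thesis by simp
qed

lemma periodic_mod:
  fixes v :: "nat \<Rightarrow> 'a"
  assumes "\<forall>j. v (j + n) = v j"
  shows "v (j mod n) = v j"
proof -
  have "v (k + m * n) = v k" for k m
  proof (induction m)
    case (Suc m)
    have "v (k + Suc m * n) = v ((k + m * n) + n)" by (simp add: algebra_simps)
    also have "\<dots> = v (k + m * n)" using assms by blast
    finally show ?case using Suc.IH by simp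
  qed simp
  from this[of "j mod n" "j div n"] show ?thesis by simp
qed

lemma periodic_mod_eq:
  fixes v :: "nat \<Rightarrow> 'a"
  assumes "\<forall>j. v (j + n) = v j" "j mod n = k mod n"
  shows "v j = v k"
  using periodic_mod[OF assms(1), of j] periodic_mod[OF assms(1), of k] assms(2) by simp

lemma simple_closed_chain_shift:
  fixes v :: "nat \<Rightarrow> complex"
  assumes periodic: "\<forall>j. v (j + n) = v j" and simple: "simple_closed_chain n v" and "n > 0"
  shows "simple_closed_chain n (\<lambda>j. v (j + m))"
  unfolding simple_closed_chain_def
proof (intro allI impI)
  fix i j z
  assume i: "i < n" and j: "j < n" and "i \<noteq> j"
    and zi: "z \<in> closed_segment (v (i + m)) (v (Suc i + m))"
    and zj: "z \<in> closed_segment (v (j + m)) (v (Suc j + m))"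
  define i' j' where "i' = (i + m) mod n" and "j' = (j + m) mod n"
  have vi: "v (i + m) = v i'" "v (Suc i + m) = v (Suc i')"
    and vj: "v (j + m) = v j'" "v (Suc j + m) = v (Suc j')"
    unfolding i'_def j'_def by (auto intro: periodic_mod_eq[OF periodic] simp: mod_Suc_eq)
  have "i' < n" "j' < n" unfolding i'_def j'_def using \<open>n > 0\<close> by auto
  moreover have "i' \<noteq> j'"
    using \<open>i \<noteq> j\<close> i j unfolding i'_def j'_def mod_add_right_cancel_nat by simp
  ultimately have "(j' = Suc i' mod n \<and> z = v j') \<or> (i' = Suc j' mod n \<and> z = v i')"
    using simple zi zj vi vj unfolding simple_closed_chain_def by auto
  moreover have succ: "(k + m) mod n = Suc ((l + m) mod n) mod n \<longleftrightarrow> k = Suc l mod n"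
    if "k < n" for k l
  proof -
    have "Suc ((l + m) mod n) mod n = (Suc l + m) mod n" by (simp add: mod_Suc_eq)
    then show ?thesis using that mod_add_right_cancel_nat[of k m n "Suc l"] by simp
  qed
  ultimately show "(j = Suc i mod n \<and> z = v (j + m)) \<or> (i = Suc j mod n \<and> z = v (i + m))"
    using vi vj succ[OF i, of j] succ[OF j, of i] unfolding i'_def j'_def by auto
qed

text \<open>Writing \<open>i + n\<close> instead of \<open>i\<close> avoids truncated subtraction at \<open>i = 0\<close> for
  \<open>n\<close>-periodic \<open>v\<close>.\<close>
definition height_peak :: "nat \<Rightarrow> (nat \<Rightarrow> complex) \<Rightarrow> nat \<Rightarrow> bool" where
  "height_peak n v i \<longleftrightarrow> Im (v (i + n) - v (i + n - 1)) > 0 \<and> Im (v (Suc i) - v i) < 0"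

lemma height_peak_pos:
  assumes "\<forall>j. v (j + n) = v j" "0 < i"
  shows "height_peak n v i \<longleftrightarrow> Im (v i - v (i - 1)) > 0 \<and> Im (v (Suc i) - v i) < 0"
  using assms(1)[rule_format, of i] assms(1)[rule_format, of "i - 1"] assms(2)
  unfolding height_peak_def by (simp add: algebra_simps)

lemma height_peak_shift:
  fixes v :: "nat \<Rightarrow> complex"
  assumes periodic: "\<forall>j. v (j + n) = v j" and "n > 0"
  shows "height_peak n (\<lambda>j. v (j + m)) i \<longleftrightarrow> height_peak n v ((i + m) mod n)"
proof -
  define i' where "i' = (i + m) mod n"
  have e0: "v i' = v (i + m)" unfolding i'_def by (rule periodic_mod[OF periodic])
  moreover have "v (i' + n) = v (i + n + m)"
    using periodic e0 by (metis add.commute add.left_commute)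
  moreover have "v (Suc i') = v (Suc i + m)"
    unfolding i'_def by (rule periodic_mod_eq[OF periodic]) (simp add: mod_Suc_eq)
  moreover have "v (i' + n - 1) = v (i + n - 1 + m)"
  proof (rule periodic_mod_eq[OF periodic])
    have "(i' + (n - 1)) mod n = (i + m + (n - 1)) mod n" unfolding i'_def by (simp add: mod_add_left_eq)
    then show "(i' + n - 1) mod n = (i + n - 1 + m) mod n" using \<open>n > 0\<close> by (simp add: algebra_simps)
  qed
  ultimately show ?thesis unfolding height_peak_def i'_def[symmetric] by (simp add: algebra_simps)
qed

lemma height_peak_mod:
  fixes v :: "nat \<Rightarrow> complex"
  assumes periodic: "\<forall>j. v (j + n) = v j" and "n > 0" "0 < j"
    and "Im (v j - v (j - 1)) > 0" "Im (v (Suc j) - v j) < 0"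
  shows "height_peak n v (j mod n)"
proof -
  have "v (j mod n + n - 1) = v (j - 1)"
  proof (rule periodic_mod_eq[OF periodic])
    have "(j mod n + (n - 1)) mod n = (j + (n - 1)) mod n" by (simp add: mod_add_left_eq)
    also have "j + (n - 1) = (j - 1) + n" using assms(2,3) by simp
    finally show "(j mod n + n - 1) mod n = (j - 1) mod n" using \<open>n > 0\<close> by simp
  qed
  moreover have "v (j mod n + n) = v j" "v (Suc (j mod n)) = v (Suc j)"
    by (rule periodic_mod_eq[OF periodic]; simp add: mod_Suc_eq)+
  moreover have "v (j mod n) = v j" by (rule periodic_mod[OF periodic])
  ultimately show ?thesis unfolding height_peak_def using assms(4,5) by simp
qed

lemma first_change:
  fixes P :: "nat \<Rightarrow> bool"
  assumes "P s" "\<not> P t" "s < t"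
  obtains k where "s < k" "k \<le> t" "\<forall>j\<in>{s..<k}. P j" "\<not> P k"
proof
  define k where "k = (LEAST k. s < k \<and> \<not> P k)"
  show "s < k" "\<not> P k" using LeastI[of "\<lambda>k. s < k \<and> \<not> P k" t] assms unfolding k_def by auto
  show "k \<le> t" unfolding k_def by (rule Least_le) (use assms in auto)
  show "\<forall>j\<in>{s..<k}. P j"
    using not_less_Least[of _ "\<lambda>k. s < k \<and> \<not> P k"] assms(1) unfolding k_def[symmetric]
    by (metis atLeastLessThan_iff le_neq_implies_less)
qed

lemma last_change:
  fixes P :: "nat \<Rightarrow> bool"
  assumes "P s" "\<not> P t" "s < t"
  obtains k where "s < k" "k \<le> t" "P (k - 1)" "\<forall>j\<in>{k..t}. \<not> P j"
  using assms
proof (induction t arbitrary: thesis)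
  case (Suc t)
  show ?case
  proof (cases "P t")
    case True
    then show ?thesis using Suc.prems(1)[of "Suc t"] Suc.prems(3,4) by auto
  next
    case False
    then have "s < t" using Suc.prems(2,4) by (metis less_antisym)
    then obtain k where k: "s < k" "k \<le> t" "P (k - 1)" "\<forall>j\<in>{k..t}. \<not> P j"
      using Suc.IH[OF _ Suc.prems(2) False] by blast
    then have "\<forall>j\<in>{k..Suc t}. \<not> P j" using Suc.prems(3) by (metis atLeastAtMost_iff le_Suc_eq)
    then show ?thesis using Suc.prems(1)[of k] k by simp
  qed
qed simp

text \<open>The signs of the height increments \<open>D\<close> of a closed chain with a peak at \<open>0\<close>
  and another one at \<open>q\<close>: from \<open>0\<close> it descends to a valley \<open>b\<close> and climbs to a peak
  \<open>e\<close>; it reaches \<open>0\<close> again from a valley \<open>a\<close> that it enters from a peak \<open>c\<close>.\<close>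
lemma peak_valley_runs:
  fixes D :: "nat \<Rightarrow> real"
  assumes nz: "\<forall>j. D j \<noteq> 0" and first: "D 0 < 0" and last: "0 < D (n - 1)"
    and q: "0 < q" "q < n" "0 < D (q - 1)" "D q < 0"
  obtains b e c a where "0 < b" "b < e" "e < a" "b < c" "c < a" "a < n"
    "\<forall>j\<in>{0..<b}. D j < 0" "\<forall>j\<in>{b..<e}. 0 < D j" "D e < 0"
    "0 < D (c - 1)" "\<forall>j\<in>{c..<a}. D j < 0" "\<forall>j\<in>{a..<n}. 0 < D j"
proof -
  have pos_iff: "0 < D j \<longleftrightarrow> \<not> D j < 0" for j using nz[rule_format, of j] by linarith
  have "0 < q - 1" using q first by (cases "q = 1") auto
  obtain b where b: "0 < b" "b \<le> q - 1" "\<forall>j\<in>{0..<b}. D j < 0" "\<not> D b < 0"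
    by (rule first_change[of "\<lambda>j. D j < 0" 0 "q - 1"]) (use first q pos_iff \<open>0 < q - 1\<close> in auto)
  obtain e where e: "b < e" "e \<le> q" "\<forall>j\<in>{b..<e}. 0 < D j" "\<not> 0 < D e"
    by (rule first_change[of "\<lambda>j. 0 < D j" b q]) (use b q pos_iff in auto)
  have "q < n - 1" using q last by (cases "q = n - 1") auto
  obtain a where a: "q < a" "a \<le> n - 1" "D (a - 1) < 0" "\<forall>j\<in>{a..n - 1}. \<not> D j < 0"
    by (rule last_change[of "\<lambda>j. D j < 0" q "n - 1"]) (use q last pos_iff \<open>q < n - 1\<close> in auto)
  have "b < a - 1" "\<not> 0 < D (a - 1)" using a b q by auto
  obtain c where c: "b < c" "c \<le> a - 1" "0 < D (c - 1)" "\<forall>j\<in>{c..a - 1}. \<not> 0 < D j"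
    by (rule last_change[of "\<lambda>j. 0 < D j" b "a - 1"]) (use b pos_iff \<open>b < a - 1\<close> \<open>\<not> 0 < D (a - 1)\<close> in auto)
  have signs: "D e < 0" "\<forall>j\<in>{a..<n}. 0 < D j" "\<forall>j\<in>{c..<a}. D j < 0"
    using e(4) a(4) c(4) pos_iff by auto
  have order: "e < a" "c < a" "a < n" using e(2) a(1,2) c(2) q(2) by linarith+
  show thesis using that[of b e a c] b(1,3) e(1,3) c(1,3) signs order by blast
qed

text \<open>Vertex \<open>0\<close> is a lowest peak of a closed chain turning left everywhere, with indices as in
  \<open>peak_valley_runs\<close>. Whichever of the valleys \<open>a\<close>, \<open>b\<close> is higher, the chain climbing
  from it to the peak \<open>c\<close> or \<open>e\<close> is trapped between the two chains leaving \<open>0\<close>.\<close>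
locale lowest_peak_configuration =
  fixes n :: nat and v :: "nat \<Rightarrow> complex" and b e c a :: nat
  assumes periodic: "\<forall>j. v (j + n) = v j" and simple: "simple_closed_chain n v"
    and left: "\<forall>j. Im ((v (Suc (Suc j)) - v (Suc j)) * cnj (v (Suc j) - v j)) > 0"
    and order: "0 < b" "b < e" "e < a" "b < c" "c < a" "a < n"
    and descent_0: "monotone_chain v (-1) 0 b" and ascent_b: "monotone_chain v 1 b e"
    and descent_c: "monotone_chain v (-1) c a" and ascent_a: "monotone_chain v 1 a n"
    and high: "Im (v 0) \<le> Im (v c)" "Im (v 0) \<le> Im (v e)"
begin

lemma closed: "v n = v 0"
  using periodic[rule_format, of 0] by simp

lemma below_top: "Im (v b) < Im (v 0)" "Im (v a) < Im (v 0)"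
  "Im (v 1) < Im (v 0)" "Im (v (n - 1)) < Im (v 0)"
  using monotone_chain_less[OF descent_0, of 0 b] monotone_chain_less[OF descent_0, of 0 1]
    monotone_chain_less[OF ascent_a, of a n] monotone_chain_less[OF ascent_a, of "n - 1" n]
    order closed by auto

lemma left_at: "0 < j \<Longrightarrow> Im ((v (Suc j) - v j) * cnj (v j - v (j - 1))) > 0"
  using left[rule_format, of "j - 1"] by simp

lemma top_witness:
  assumes "y0 < Im (v 0)"
  shows "\<exists>y\<in>{y0<..<Im (v 0)}. Re (chain_at_height v 0 b y) < Re (chain_at_height v a n y)"
proof
  define y where "y = (max (max (Im (v (n - 1))) (Im (v 1))) y0 + Im (v 0)) / 2"
  show "y \<in> {y0<..<Im (v 0)}" unfolding y_def using assms below_top by auto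
  show "Re (chain_at_height v 0 b y) < Re (chain_at_height v a n y)"
  proof (rule peak_witness[OF ascent_a _ descent_0])
    have "v (Suc (Suc (n - 1))) = v 1" "v (Suc (n - 1)) = v 0"
      using periodic[rule_format, of 1] closed order by simp_all
    then show "Im ((v (Suc 0) - v 0) * cnj (v n - v (n - 1))) > 0"
      using left[rule_format, of "n - 1"] closed order by simp
  qed (use assms below_top order closed in \<open>simp_all add: y_def\<close>)
qed

lemma valley_witness_below_top:
  assumes down: "monotone_chain v (-1) s k" "s < k" and up: "monotone_chain v 1 k t" "k < t"
    and "Im (v k) < Im (v 0)"
  shows "\<exists>y\<in>{Im (v k)<..<Im (v 0)}. Re (chain_at_height v s k y) < Re (chain_at_height v k t y)"
proof
  have "0 < k" using down(2) by simp
  have "Im (v k) < Im (v (k - 1))" "Im (v k) < Im (v (Suc k))"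
    using monotone_chain_less[OF down(1), of "k - 1" k] monotone_chain_less[OF up(1), of k "Suc k"]
      down(2) up(2) by auto
  define y where "y = (Im (v k) + min (min (Im (v (k - 1))) (Im (v (Suc k)))) (Im (v 0))) / 2"
  show "y \<in> {Im (v k)<..<Im (v 0)}"
    unfolding y_def using assms(5) \<open>Im (v k) < Im (v (k - 1))\<close> \<open>Im (v k) < Im (v (Suc k))\<close> by auto
  then show "Re (chain_at_height v s k y) < Re (chain_at_height v k t y)"
    using valley_witness[OF down up refl left_at[OF \<open>0 < k\<close>]] \<open>Im (v k) < Im (v (k - 1))\<close>
      \<open>Im (v k) < Im (v (Suc k))\<close> unfolding y_def by auto
qed

lemma outer_chains_apart:
  assumes "max (Im (v a)) (Im (v b)) < y" "y < Im (v 0)"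
  shows "chain_at_height v a n y \<noteq> chain_at_height v 0 b y"
proof
  assume eq: "chain_at_height v a n y = chain_at_height v 0 b y"
  have "(n mod n = 0 \<and> Im (v n) = y) \<or> (b mod n = a \<and> Im (v b) = y)"
    by (rule chains_at_height_meet[OF simple closed ascent_a _ _ descent_0])
      (use assms order closed eq in auto)
  then show False using assms order closed by auto
qed

lemma valley_a_impossible:
  assumes low: "Im (v b) \<le> Im (v a)"
  shows False
proof -
  define y0 y1 where "y0 = Im (v a)" and "y1 = Im (v 0)"
  obtain y2 y3 where y2: "y2 \<in> {y0<..<y1}" "Re (chain_at_height v 0 b y2) < Re (chain_at_height v a n y2)"
    and y3: "y3 \<in> {y0<..<y1}" "Re (chain_at_height v c a y3) < Re (chain_at_height v a n y3)"
    using top_witness[of y0] valley_witness_below_top[OF descent_c _ ascent_a] below_top order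
    unfolding y0_def y1_def by blast
  have "\<exists>y\<in>{y0..y1}. chain_at_height v 0 b y = chain_at_height v c a y"
  proof (rule trapped_curve_meets[where \<epsilon> = 1 and R = "chain_at_height v a n" and p = y2 and q = y3])
    show "\<forall>y\<in>{y0..y1}. Im (chain_at_height v a n y) = y \<and> Im (chain_at_height v 0 b y) = y
        \<and> Im (chain_at_height v c a y) = y"
      using Im_chain_at_height[OF ascent_a] Im_chain_at_height[OF descent_0]
        Im_chain_at_height[OF descent_c] order closed high low unfolding y0_def y1_def by auto
    show "chain_at_height v a n y1 = chain_at_height v 0 b y1"
      using chain_at_height_end[OF ascent_a] chain_at_height_start[OF descent_0] order closed
      unfolding y1_def by simp
    show "chain_at_height v a n y0 = chain_at_height v c a y0"
      using chain_at_height_start[OF ascent_a] chain_at_height_end[OF descent_c] order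
      unfolding y0_def by simp
    show "\<forall>y\<in>{y0<..<y1}. chain_at_height v a n y \<noteq> chain_at_height v 0 b y"
      using outer_chains_apart low unfolding y0_def y1_def by auto
    show "\<forall>y\<in>{y0<..<y1}. chain_at_height v a n y \<noteq> chain_at_height v c a y"
    proof (intro ballI notI)
      fix y assume y: "y \<in> {y0<..<y1}" and "chain_at_height v a n y = chain_at_height v c a y"
      then have "(n mod n = c \<and> Im (v n) = y) \<or> (a mod n = a \<and> Im (v a) = y)"
        by (intro chains_at_height_meet[OF simple closed ascent_a _ _ descent_c])
          (use order closed high in \<open>auto simp: y0_def y1_def\<close>)
      then show False using y order unfolding y0_def by auto
    qed
  qed (use y2 y3 in \<open>simp_all add: continuous_on_chain_at_height\<close>)
  then obtain y where y: "y \<in> {y0..y1}" "chain_at_height v 0 b y = chain_at_height v c a y"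
    by blast
  then have "(b mod n = c \<and> Im (v b) = y) \<or> (a mod n = 0 \<and> Im (v a) = y)"
    by (intro chains_at_height_meet[OF simple closed descent_0 _ _ descent_c])
      (use order closed high low in \<open>auto simp: y0_def y1_def\<close>)
  then show False using order by auto
qed

lemma valley_b_impossible:
  assumes low: "Im (v a) < Im (v b)"
  shows False
proof -
  define y0 y1 where "y0 = Im (v b)" and "y1 = Im (v 0)"
  obtain y2 y3 where y2: "y2 \<in> {y0<..<y1}" "Re (chain_at_height v 0 b y2) < Re (chain_at_height v a n y2)"
    and y3: "y3 \<in> {y0<..<y1}" "Re (chain_at_height v 0 b y3) < Re (chain_at_height v b e y3)"
    using top_witness[of y0] valley_witness_below_top[OF descent_0 _ ascent_b] below_top order
    unfolding y0_def y1_def by blast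
  have "\<exists>y\<in>{y0..y1}. chain_at_height v a n y = chain_at_height v b e y"
  proof (rule trapped_curve_meets[where \<epsilon> = "-1" and R = "chain_at_height v 0 b" and p = y2 and q = y3])
    show "\<forall>y\<in>{y0..y1}. Im (chain_at_height v 0 b y) = y \<and> Im (chain_at_height v a n y) = y
        \<and> Im (chain_at_height v b e y) = y"
      using Im_chain_at_height[OF ascent_a] Im_chain_at_height[OF descent_0]
        Im_chain_at_height[OF ascent_b] order closed high low unfolding y0_def y1_def by auto
    show "chain_at_height v 0 b y1 = chain_at_height v a n y1"
      using chain_at_height_end[OF ascent_a] chain_at_height_start[OF descent_0] order closed
      unfolding y1_def by simp
    show "chain_at_height v 0 b y0 = chain_at_height v b e y0"
      using chain_at_height_end[OF descent_0] chain_at_height_start[OF ascent_b] order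
      unfolding y0_def by simp
    show "\<forall>y\<in>{y0<..<y1}. chain_at_height v 0 b y \<noteq> chain_at_height v a n y"
      using outer_chains_apart low unfolding y0_def y1_def by fastforce
    show "\<forall>y\<in>{y0<..<y1}. chain_at_height v 0 b y \<noteq> chain_at_height v b e y"
    proof (intro ballI notI)
      fix y assume y: "y \<in> {y0<..<y1}" and "chain_at_height v 0 b y = chain_at_height v b e y"
      then have "(b mod n = b \<and> Im (v b) = y) \<or> (e mod n = 0 \<and> Im (v e) = y)"
        by (intro chains_at_height_meet[OF simple closed descent_0 _ _ ascent_b])
          (use order closed high in \<open>auto simp: y0_def y1_def\<close>)
      then show False using y order unfolding y0_def by auto
    qed
  qed (use y2 y3 in \<open>simp_all add: continuous_on_chain_at_height\<close>)
  then obtain y where y: "y \<in> {y0..y1}" "chain_at_height v a n y = chain_at_height v b e y"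
    by blast
  then have "(n mod n = b \<and> Im (v n) = y) \<or> (e mod n = a \<and> Im (v e) = y)"
    by (intro chains_at_height_meet[OF simple closed ascent_a _ _ ascent_b])
      (use order closed high low in \<open>auto simp: y0_def y1_def\<close>)
  then show False using order by auto
qed

end

lemma lowest_peak_unique:
  fixes v :: "nat \<Rightarrow> complex"
  assumes periodic: "\<forall>j. v (j + n) = v j" and simple: "simple_closed_chain n v"
    and no_horizontal: "\<forall>j. Im (v (Suc j) - v j) \<noteq> 0"
    and left: "\<forall>j. Im ((v (Suc (Suc j)) - v (Suc j)) * cnj (v (Suc j) - v j)) > 0"
    and peak0: "height_peak n v 0" and lowest: "\<forall>i<n. height_peak n v i \<longrightarrow> Im (v 0) \<le> Im (v i)"
    and q: "0 < q" "q < n" "height_peak n v q"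
  shows False
proof -
  define D where "D j = Im (v (Suc j) - v j)" for j
  have "Suc (n - 1) = n" "Suc (q - 1) = q" using q by simp_all
  then have signs: "D 0 < 0" "0 < D (n - 1)" "0 < D (q - 1)" "D q < 0"
    using peak0 height_peak_pos[OF periodic q(1)] q(3) unfolding height_peak_def D_def by auto
  have "\<forall>j. D j \<noteq> 0" using no_horizontal unfolding D_def by simp
  then obtain b e a c where order: "0 < b" "b < e" "e < a" "b < c" "c < a" "a < n"
    and runs: "\<forall>j\<in>{0..<b}. D j < 0" "\<forall>j\<in>{b..<e}. 0 < D j" "D e < 0"
      "0 < D (c - 1)" "\<forall>j\<in>{c..<a}. D j < 0" "\<forall>j\<in>{a..<n}. 0 < D j"
    by (rule peak_valley_runs[OF _ signs(1,2) q(1,2) signs(3,4)])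
  have "0 < D (e - 1)" using runs(2) order by simp
  then have "height_peak n v c" "height_peak n v e"
    using height_peak_pos[OF periodic, of c] height_peak_pos[OF periodic, of e] order runs
    unfolding D_def by (auto simp: Suc_diff_1)
  then interpret lowest_peak_configuration n v b e c a
    using periodic simple left order runs lowest
    unfolding lowest_peak_configuration_def monotone_chain_def D_def by auto
  show False using valley_a_impossible valley_b_impossible by linarith
qed

lemma left_turning_chain_unique_peak:
  fixes v :: "nat \<Rightarrow> complex"
  assumes periodic: "\<forall>j. v (j + n) = v j" and simple: "simple_closed_chain n v"
    and no_horizontal: "\<forall>j. Im (v (Suc j) - v j) \<noteq> 0"
    and left: "\<forall>j. Im ((v (Suc (Suc j)) - v (Suc j)) * cnj (v (Suc j) - v j)) > 0"
    and peaks: "i1 < n" "i2 < n" "i1 \<noteq> i2" "height_peak n v i1" "height_peak n v i2"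
  shows False
proof -
  have "n > 0" using peaks by simp
  define S where "S = {i. i < n \<and> height_peak n v i}"
  have S: "finite S" "S \<noteq> {}" unfolding S_def using peaks by auto
  define m where "m = arg_min_on (\<lambda>i. Im (v i)) S"
  have m: "m \<in> S" "\<forall>i\<in>S. Im (v m) \<le> Im (v i)"
    unfolding m_def using arg_min_if_finite(1)[OF S] arg_min_least[OF S] by auto
  obtain p where p: "p \<in> S" "p \<noteq> m" using peaks unfolding S_def by blast
  \<comment> \<open>renumber the vertices so that the lowest peak becomes vertex \<open>0\<close>\<close>
  define w where "w j = v (j + m)" for j
  have w_periodic: "\<forall>j. w (j + n) = w j"
    using periodic unfolding w_def by (metis add.commute add.left_commute)
  have w_peak: "height_peak n w i \<longleftrightarrow> (i + m) mod n \<in> S" for i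
    using height_peak_shift[OF periodic \<open>n > 0\<close>, of m i] \<open>n > 0\<close> unfolding w_def S_def by simp
  define q where "q = (p + n - m) mod n"
  have "(q + m) mod n = p"
  proof -
    have "(q + m) mod n = (p + n - m + m) mod n" unfolding q_def by (simp add: mod_add_left_eq)
    also have "\<dots> = p" using m(1) p(1) unfolding S_def by simp
    finally show ?thesis .
  qed
  show False
  proof (rule lowest_peak_unique[where v = w and q = q])
    show "simple_closed_chain n w"
      unfolding w_def by (rule simple_closed_chain_shift[OF periodic simple \<open>n > 0\<close>])
    show "height_peak n w 0" using w_peak[of 0] m(1) unfolding S_def by simp
    show "height_peak n w q" using w_peak[of q] \<open>(q + m) mod n = p\<close> p(1) by simp
    show "0 < q" using \<open>(q + m) mod n = p\<close> p m(1) unfolding S_def by (cases q) auto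
    show "\<forall>i<n. height_peak n w i \<longrightarrow> Im (w 0) \<le> Im (w i)"
      using w_peak m(2) periodic_mod[OF periodic] unfolding w_def by auto
  qed (use w_periodic no_horizontal left \<open>n > 0\<close> in \<open>simp_all add: w_def q_def\<close>)
qed

lemma sin_add_int_2pi: "sin (x + 2 * pi * of_int m) = sin x"
  using sin_add[of x "2 * pi * of_int m"] sin_int_2pin[of m] cos_int_2pin[of m] by simp

lemma crossing_odd_multiple_of_pi:
  fixes \<theta> :: "nat \<Rightarrow> real"
  assumes steps: "\<forall>j. \<theta> j < \<theta> (Suc j) \<and> \<theta> (Suc j) \<le> \<theta> j + pi / 2"
    and c: "\<theta> 0 < c" "c \<le> \<theta> n" "c = pi + 2 * pi * of_int m"
  obtains j where "1 \<le> j" "j \<le> n" "\<theta> (j - 1) < c" "c \<le> \<theta> j" "\<theta> j < c + pi / 2"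
    "sin (\<theta> (j - 1)) > 0" "sin (\<theta> j) \<le> 0"
proof
  define j where "j = (LEAST j. c \<le> \<theta> j)"
  show above: "c \<le> \<theta> j" unfolding j_def by (rule LeastI[of _ n]) (use c in auto)
  show "j \<le> n" unfolding j_def by (rule Least_le) (use c in auto)
  show "1 \<le> j" using above c by (cases j) auto
  then show below: "\<theta> (j - 1) < c"
    using not_less_Least[of "j - 1" "\<lambda>j. c \<le> \<theta> j"] unfolding j_def[symmetric] by auto
  have step: "\<theta> j \<le> \<theta> (j - 1) + pi / 2" using steps[rule_format, of "j - 1"] \<open>1 \<le> j\<close> by simp
  then show "\<theta> j < c + pi / 2" using below by simp
  have "0 < \<theta> (j - 1) - 2 * pi * of_int m" "\<theta> (j - 1) - 2 * pi * of_int m < pi"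
    using step above below c(3) pi_gt_zero by linarith+
  then show "sin (\<theta> (j - 1)) > 0"
    using sin_gt_zero sin_add_int_2pi[of "\<theta> (j - 1) - 2 * pi * of_int m" m] by simp
  have "0 \<le> \<theta> j - pi - 2 * pi * of_int m" "\<theta> j - pi - 2 * pi * of_int m \<le> pi"
    using step above below c(3) pi_gt_zero by linarith+
  moreover have "sin (\<theta> j) = sin ((\<theta> j - pi - 2 * pi * of_int m) + pi + 2 * pi * of_int m)" by simp
  then have "sin (\<theta> j) = - sin (\<theta> j - pi - 2 * pi * of_int m)"
    by (simp only: sin_add_int_2pi sin_periodic_pi)
  ultimately show "sin (\<theta> j) \<le> 0" using sin_ge_zero by simp
qed

lemma edge_direction_angle:
  fixes v :: "nat \<Rightarrow> complex" and \<beta> r :: "nat \<Rightarrow> real"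
  assumes turn: "\<forall>j. v (Suc (Suc j)) - v (Suc j) = of_real (r j) * cis (\<beta> (Suc j)) * (v (Suc j) - v j)"
    and r: "\<forall>j. r j > 0"
  shows "v (Suc j) - v j =
    of_real (cmod (v (Suc j) - v j)) * cis (Arg (v 1 - v 0) + (\<Sum>l<j. \<beta> (Suc l)))"
proof (induction j)
  case 0
  show ?case using rcis_cmod_Arg[of "v 1 - v 0"] unfolding rcis_def by simp
next
  case (Suc j)
  define \<theta> d L where "\<theta> = Arg (v 1 - v 0) + (\<Sum>l<j. \<beta> (Suc l))"
    and "d = v (Suc j) - v j" and "L = cmod d"
  have IH: "d = of_real L * cis \<theta>" using Suc.IH unfolding \<theta>_def d_def L_def .
  have "v (Suc (Suc j)) - v (Suc j) = of_real (r j) * cis (\<beta> (Suc j)) * d"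
    using turn unfolding d_def by blast
  also have "\<dots> = of_real (r j * L) * cis (\<theta> + \<beta> (Suc j))"
    unfolding IH by (simp add: cis_mult[symmetric] mult_ac)
  finally have step: "v (Suc (Suc j)) - v (Suc j) = of_real (r j * L) * cis (\<theta> + \<beta> (Suc j))" .
  moreover have "cmod (v (Suc (Suc j)) - v (Suc j)) = r j * L"
    unfolding step using r[rule_format, of j] by (simp add: norm_mult L_def)
  moreover have "\<theta> + \<beta> (Suc j) = Arg (v 1 - v 0) + (\<Sum>l<Suc j. \<beta> (Suc l))"
    unfolding \<theta>_def by simp
  ultimately show ?case by simp
qed

lemma height_peak_of_direction_change:
  fixes v :: "nat \<Rightarrow> complex" and \<theta> :: "nat \<Rightarrow> real"
  assumes periodic: "\<forall>j. v (j + n) = v j" and "n > 0"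
    and no_horizontal: "\<forall>j. Im (v (Suc j) - v j) \<noteq> 0"
    and direction: "\<And>j. Im (v (Suc j) - v j) = cmod (v (Suc j) - v j) * sin (\<theta> j)"
    and j: "1 \<le> j" "sin (\<theta> (j - 1)) > 0" "sin (\<theta> j) \<le> 0"
  shows "height_peak n v (j mod n)"
proof (rule height_peak_mod[OF periodic \<open>n > 0\<close>])
  have "v (Suc (j - 1)) - v (j - 1) \<noteq> 0"
    using no_horizontal[rule_format, of "j - 1"] by (metis zero_complex.sel(2))
  then have "Im (v (Suc (j - 1)) - v (j - 1)) > 0" using direction[of "j - 1"] j(2) by simp
  then show "Im (v j - v (j - 1)) > 0" using j(1) by simp
  show "Im (v (Suc j) - v j) < 0"
    using direction[of j] j(3) no_horizontal[rule_format, of j]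
    by (smt (verit) mult_nonneg_nonpos norm_ge_zero)
qed (use j in simp)

lemma two_peaks_if_turning_ge_4pi:
  fixes v :: "nat \<Rightarrow> complex" and \<beta> r :: "nat \<Rightarrow> real"
  assumes "n > 0" and periodic: "\<forall>j. v (j + n) = v j"
    and no_horizontal: "\<forall>j. Im (v (Suc j) - v j) \<noteq> 0"
    and turn: "\<forall>j. v (Suc (Suc j)) - v (Suc j) = of_real (r j) * cis (\<beta> (Suc j)) * (v (Suc j) - v j)"
    and r: "\<forall>j. r j > 0" and \<beta>: "\<forall>j. 0 < \<beta> j \<and> \<beta> j \<le> pi / 2"
    and total: "(\<Sum>j<n. \<beta> (Suc j)) \<ge> 4 * pi"
  obtains i1 i2 where "i1 < n" "i2 < n" "i1 \<noteq> i2" "height_peak n v i1" "height_peak n v i2"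
proof -
  define \<theta> where "\<theta> j = Arg (v 1 - v 0) + (\<Sum>l<j. \<beta> (Suc l))" for j
  have steps: "\<forall>j. \<theta> j < \<theta> (Suc j) \<and> \<theta> (Suc j) \<le> \<theta> j + pi / 2" using \<beta> unfolding \<theta>_def by auto
  have \<theta>_mono: "\<theta> j \<le> \<theta> k" if "j \<le> k" for j k
    using that steps by (induction k) (auto simp: le_Suc_eq intro: order.trans less_imp_le)
  have Im_edge: "Im (v (Suc j) - v j) = cmod (v (Suc j) - v j) * sin (\<theta> j)" for j
    by (subst edge_direction_angle[OF turn r]) (simp add: \<theta>_def)
  have peak: "height_peak n v (j mod n)"
    if "1 \<le> j" "sin (\<theta> (j - 1)) > 0" "sin (\<theta> j) \<le> 0" for j
    using height_peak_of_direction_change[OF periodic \<open>n > 0\<close> no_horizontal] Im_edge that by blast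
  \<comment> \<open>where the direction crosses an odd multiple of \<open>pi\<close> the chain passes a peak\<close>
  define m where "m = \<lfloor>(\<theta> 0 + pi) / (2 * pi)\<rfloor>"
  define c where "c = pi + 2 * pi * of_int m"
  have "\<theta> 0 < c" "c \<le> \<theta> 0 + 2 * pi"
    using floor_correct[of "(\<theta> 0 + pi) / (2 * pi)"] unfolding c_def m_def[symmetric]
    by (simp_all add: field_simps)
  moreover have "\<theta> 0 + 4 * pi \<le> \<theta> n" using total unfolding \<theta>_def by simp
  ultimately have c: "\<theta> 0 < c" "c \<le> \<theta> n" "\<theta> 0 < c + 2 * pi" "c + 2 * pi \<le> \<theta> n"
    using pi_gt_zero by linarith+
  have c2: "c + 2 * pi = pi + 2 * pi * of_int (m + 1)" unfolding c_def by (simp add: algebra_simps)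
  obtain j1 where j1: "1 \<le> j1" "j1 \<le> n" "\<theta> (j1 - 1) < c" "c \<le> \<theta> j1" "\<theta> j1 < c + pi / 2"
      "sin (\<theta> (j1 - 1)) > 0" "sin (\<theta> j1) \<le> 0"
    by (rule crossing_odd_multiple_of_pi[OF steps c(1,2) c_def])
  obtain j2 where j2: "1 \<le> j2" "j2 \<le> n" "\<theta> (j2 - 1) < c + 2 * pi" "c + 2 * pi \<le> \<theta> j2"
      "\<theta> j2 < c + 2 * pi + pi / 2" "sin (\<theta> (j2 - 1)) > 0" "sin (\<theta> j2) \<le> 0"
    by (rule crossing_odd_multiple_of_pi[OF steps c(3,4) c2])
  have "j1 < j2"
  proof (rule ccontr)
    assume "\<not> j1 < j2"
    then have "\<theta> j2 \<le> \<theta> j1" using \<theta>_mono by simp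
    then show False using j1(5) j2(4) pi_gt_zero by linarith
  qed
  then have "j1 mod n \<noteq> j2 mod n" using j1(1,2) j2(2) by (cases "j2 = n") auto
  then show thesis
    using that[of "j1 mod n" "j2 mod n"] peak[OF j1(1,6,7)] peak[OF j2(1,6,7)] \<open>n > 0\<close> by simp
qed

lemma simple_chain_turn_sum_lt_4pi:
  fixes v :: "nat \<Rightarrow> complex" and \<beta> r :: "nat \<Rightarrow> real"
  assumes "n > 0" and periodic: "\<forall>j. v (j + n) = v j" and simple: "simple_closed_chain n v"
    and no_horizontal: "\<forall>j. Im (v (Suc j) - v j) \<noteq> 0"
    and turn: "\<forall>j. v (Suc (Suc j)) - v (Suc j) = of_real (r j) * cis (\<beta> (Suc j)) * (v (Suc j) - v j)"
    and r: "\<forall>j. r j > 0" and \<beta>: "\<forall>j. 0 < \<beta> j \<and> \<beta> j \<le> pi / 2"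
  shows "(\<Sum>j<n. \<beta> (Suc j)) < 4 * pi"
proof (rule ccontr)
  assume "\<not> (\<Sum>j<n. \<beta> (Suc j)) < 4 * pi"
  then have "(\<Sum>j<n. \<beta> (Suc j)) \<ge> 4 * pi" by simp
  then obtain i1 i2 where "i1 < n" "i2 < n" "i1 \<noteq> i2" "height_peak n v i1" "height_peak n v i2"
    by (rule two_peaks_if_turning_ge_4pi[OF \<open>n > 0\<close> periodic no_horizontal turn r \<beta>])
  moreover have "\<forall>j. Im ((v (Suc (Suc j)) - v (Suc j)) * cnj (v (Suc j) - v j)) > 0"
  proof
    fix j
    define z where "z = v (Suc j) - v j"
    have "z \<noteq> 0" using no_horizontal[rule_format, of j] unfolding z_def by (metis zero_complex.sel(2))
    have "sin (\<beta> (Suc j)) > 0" using \<beta>[rule_format, of "Suc j"] pi_gt_zero by (intro sin_gt_zero) auto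
    moreover have "(v (Suc (Suc j)) - v (Suc j)) * cnj z = of_real (r j) * cis (\<beta> (Suc j)) * (z * cnj z)"
      using turn[rule_format, of j] unfolding z_def[symmetric] by (simp add: mult.assoc)
    then have "(v (Suc (Suc j)) - v (Suc j)) * cnj z = of_real (r j * (cmod z)\<^sup>2) * cis (\<beta> (Suc j))"
      unfolding complex_norm_square[symmetric] by (simp add: algebra_simps)
    ultimately show "Im ((v (Suc (Suc j)) - v (Suc j)) * cnj (v (Suc j) - v j)) > 0"
      using r[rule_format, of j] \<open>z \<noteq> 0\<close> unfolding z_def[symmetric] by simp
  qed
  ultimately show False
    using left_turning_chain_unique_peak[OF periodic simple no_horizontal] by blast
qed

section \<open>Turning number of simple polygons turning left\<close>

lemma sum_lessThan_Suc_cyclic: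
  fixes f :: "nat \<Rightarrow> 'a::comm_monoid_add"
  assumes "f n = f 0"
  shows "(\<Sum>i<n. f (Suc i)) = (\<Sum>i<n. f i)"
proof (cases n)
  case (Suc m)
  have "(\<Sum>i<n. f i) = f 0 + (\<Sum>i<m. f (Suc i))" unfolding Suc by (rule sum.lessThan_Suc_shift)
  moreover have "(\<Sum>i<n. f (Suc i)) = (\<Sum>i<m. f (Suc i)) + f n" unfolding Suc by simp
  ultimately show ?thesis using assms by (simp add: add.commute)
qed simp

lemma prod_lessThan_Suc_cyclic:
  fixes f :: "nat \<Rightarrow> 'a::comm_monoid_mult"
  assumes "f n = f 0"
  shows "(\<Prod>i<n. f (Suc i)) = (\<Prod>i<n. f i)"
proof (cases n)
  case (Suc m)
  have "(\<Prod>i<n. f i) = f 0 * (\<Prod>i<m. f (Suc i))" unfolding Suc by (rule prod.lessThan_Suc_shift)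
  moreover have "(\<Prod>i<n. f (Suc i)) = (\<Prod>i<m. f (Suc i)) * f n" unfolding Suc by simp
  ultimately show ?thesis using assms by (simp add: mult.commute)
qed simp

lemma cis_sum: "finite A \<Longrightarrow> cis (\<Sum>j\<in>A. f j) = (\<Prod>j\<in>A. cis (f j))"
  by (induction A rule: finite_induct) (auto simp: cis_mult[symmetric])

lemma sgn_prod: "finite A \<Longrightarrow> sgn (\<Prod>j\<in>A. f j :: complex) = (\<Prod>j\<in>A. sgn (f j))"
  by (induction A rule: finite_induct) (auto simp: sgn_mult)

lemma vtx_Suc: "vtx n P (Suc j) = nxt n P j"
  unfolding vtx_def nxt_def by simp

lemma prv_Suc: "n > 0 \<Longrightarrow> prv n P (Suc j) = vtx n P j"
  unfolding prv_def vtx_def by simp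

lemma nxt_add_n: "nxt n P (j + n) = nxt n P j"
proof -
  have "Suc (j + n) mod n = Suc j mod n" by (metis add_Suc mod_add_self2)
  then show ?thesis unfolding nxt_def by simp
qed

lemma edge_add_n: "nxt n P (j + n) - vtx n P (j + n) = nxt n P j - vtx n P j"
  unfolding nxt_add_n unfolding vtx_def by simp

lemma edge_mod: "nxt n P (j mod n) - vtx n P (j mod n) = nxt n P j - vtx n P j"
  unfolding nxt_def vtx_def by (simp add: mod_Suc_eq)

lemma turn_angle_add_n: "turn_angle n P (j + n) = turn_angle n P j"
proof -
  have "(j + n + n - 1) mod n = (j + n - 1) mod n"
  proof (cases "n = 0")
    case False
    then have "j + n + n - 1 = (j + n - 1) + n" by simp
    then show ?thesis by simp
  qed simp
  then show ?thesis unfolding turn_angle_def nxt_add_n unfolding prv_def vtx_def by simp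
qed

lemma turn_angle_Suc:
  "n > 0 \<Longrightarrow> turn_angle n P (Suc j) =
    Arg ((nxt n P (Suc j) - vtx n P (Suc j)) / (nxt n P j - vtx n P j))"
  unfolding turn_angle_def vtx_Suc prv_Suc ..

lemma next_edge_turned:
  assumes "n > 0" "nxt n P j \<noteq> vtx n P j"
  shows "nxt n P (Suc j) - vtx n P (Suc j) =
    of_real (cmod ((nxt n P (Suc j) - vtx n P (Suc j)) / (nxt n P j - vtx n P j)))
      * cis (turn_angle n P (Suc j)) * (nxt n P j - vtx n P j)"
  using rcis_cmod_Arg[of "(nxt n P (Suc j) - vtx n P (Suc j)) / (nxt n P j - vtx n P j)"] assms
  unfolding turn_angle_Suc[OF assms(1)] rcis_def by simp

lemma turn_angle_sum_int:
  assumes "n > 0" and nondeg: "\<forall>j<n. nxt n P j \<noteq> vtx n P j"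
  obtains k :: int where "(\<Sum>i<n. turn_angle n P i) = 2 * pi * of_int k"
proof -
  define d where "d j = nxt n P j - vtx n P j" for j
  have d_nz: "d j \<noteq> 0" for j
    using nondeg[rule_format, of "j mod n"] \<open>n > 0\<close> edge_mod[of n P j] unfolding d_def by auto
  define \<rho> where "\<rho> j = d (Suc j) / d j" for j
  \<comment> \<open>the turns are the arguments of the ratios of consecutive edges, whose product is \<open>1\<close>\<close>
  have "(\<Prod>j<n. \<rho> j) = 1"
    unfolding \<rho>_def prod_dividef using prod_lessThan_Suc_cyclic[of d n] edge_add_n[of n P 0] d_nz
    by (simp add: d_def prod_zero_iff)
  have "cis (\<Sum>i<n. turn_angle n P i) = cis (\<Sum>j<n. Arg (\<rho> j))"
    using sum_lessThan_Suc_cyclic[of "turn_angle n P" n] turn_angle_add_n[of n P 0]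
      turn_angle_Suc[OF \<open>n > 0\<close>] unfolding \<rho>_def d_def by simp
  also have "\<dots> = (\<Prod>j<n. sgn (\<rho> j))"
    unfolding cis_sum[OF finite_lessThan] using d_nz by (simp add: cis_Arg \<rho>_def)
  also have "\<dots> = 1" using sgn_prod[of "{..<n}" \<rho>] \<open>(\<Prod>j<n. \<rho> j) = 1\<close> by simp
  finally have "cos (\<Sum>i<n. turn_angle n P i) = 1" by (metis cis.sel(1) one_complex.sel(1))
  then obtain k :: int where "(\<Sum>i<n. turn_angle n P i) = of_int k * 2 * pi"
    using cos_one_2pi_int by auto
  then show thesis using that[of k] by simp
qed

lemma rotation_avoiding_horizontal:
  fixes z :: "nat \<Rightarrow> complex"
  assumes "\<forall>j<n. z j \<noteq> 0"
  obtains \<theta> where "\<forall>j<n. Im (cis \<theta> * z j) \<noteq> 0"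
proof -
  define B where "B = (\<Union>j<n. range (\<lambda>i::int. of_int i * pi - Arg (z j)))"
  have "countable B" unfolding B_def by (intro countable_UN countable_image) auto
  then obtain \<theta> where "\<theta> \<notin> B" using uncountable_UNIV_real by (metis UNIV_eq_I)
  have "Im (cis \<theta> * z j) \<noteq> 0" if "j < n" for j
  proof
    assume "Im (cis \<theta> * z j) = 0"
    moreover have "cis \<theta> * z j = of_real (cmod (z j)) * cis (\<theta> + Arg (z j))"
      using rcis_cmod_Arg[of "z j"] unfolding rcis_def by (simp add: cis_mult[symmetric] algebra_simps)
    ultimately have "sin (\<theta> + Arg (z j)) = 0" using assms that by simp
    then obtain i :: int where "\<theta> = of_int i * pi - Arg (z j)" using sin_zero_iff_int2
      by (metis add_diff_cancel_right')
    then show False using \<open>\<theta> \<notin> B\<close> that unfolding B_def by blast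
  qed
  then show thesis using that by blast
qed

lemma simple_polygon_linear_image:
  assumes "simple_polygon n P" "linear L" "inj L"
  shows "simple_polygon n (\<lambda>j. L (P j))"
proof -
  have edge: "edge n (\<lambda>j. L (P j)) i = L ` edge n P i" for i
    unfolding edge_def vtx_def nxt_def closed_segment_linear_image[OF assms(2)] ..
  have vtx: "{vtx n (\<lambda>j. L (P j)) i} = L ` {vtx n P i}" for i unfolding vtx_def by simp
  have eq: "L ` A \<inter> L ` B = L ` C \<longleftrightarrow> A \<inter> B = C" for A B C
    by (simp add: image_Int[OF assms(3), symmetric] inj_image_eq_iff[OF assms(3)])
  have empty: "L ` A \<inter> L ` B = {} \<longleftrightarrow> A \<inter> B = {}" for A B
    by (simp add: image_Int[OF assms(3), symmetric])
  show ?thesis using assms(1) unfolding simple_polygon_def edge vtx eq empty .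
qed

lemma simple_closed_chain_of_simple_polygon:
  assumes "simple_polygon n P"
  shows "simple_closed_chain n (\<lambda>j. P (j mod n))"
  unfolding simple_closed_chain_def
proof (intro allI impI)
  fix i j z
  assume ij: "i < n" "j < n" "i \<noteq> j"
    and z: "z \<in> closed_segment (P (i mod n)) (P (Suc i mod n))"
      "z \<in> closed_segment (P (j mod n)) (P (Suc j mod n))"
  then have z: "z \<in> edge n P i \<inter> edge n P j" unfolding edge_def vtx_def nxt_def by simp
  have "if j = Suc i mod n then edge n P i \<inter> edge n P j = {vtx n P j}
        else if i = Suc j mod n then edge n P i \<inter> edge n P j = {vtx n P i}
        else edge n P i \<inter> edge n P j = {}"
    using assms ij unfolding simple_polygon_def by simp
  then show "(j = Suc i mod n \<and> z = P (j mod n)) \<or> (i = Suc j mod n \<and> z = P (i mod n))"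
    using z unfolding vtx_def by (auto split: if_splits)
qed

lemma left_turning_polygon_turn_sum_lt_4pi:
  assumes "n > 0" and nondeg: "\<forall>i<n. nxt n P i \<noteq> vtx n P i" and simple: "simple_polygon n P"
    and left: "\<forall>i<n. 0 < turn_angle n P i \<and> turn_angle n P i \<le> pi / 2"
  shows "(\<Sum>i<n. turn_angle n P i) < 4 * pi"
proof -
  define d where "d j = nxt n P j - vtx n P j" for j
  have d_nz: "d j \<noteq> 0" for j
    using nondeg[rule_format, of "j mod n"] \<open>n > 0\<close> edge_mod[of n P j] unfolding d_def by auto
  obtain \<theta> where \<theta>: "\<forall>j<n. Im (cis \<theta> * d j) \<noteq> 0"
    by (rule rotation_avoiding_horizontal[of n d]) (use d_nz in blast)
  define v where "v j = cis \<theta> * P (j mod n)" for j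
  have edge_v: "v (Suc j) - v j = cis \<theta> * d j" for j
    unfolding v_def d_def nxt_def vtx_def by (simp add: algebra_simps)
  have turn_periodic: "turn_angle n P (j mod n) = turn_angle n P j" for j
    using periodic_mod[of "turn_angle n P" n j] turn_angle_add_n by simp
  have "(\<Sum>j<n. turn_angle n P (Suc j)) < 4 * pi"
  proof (rule simple_chain_turn_sum_lt_4pi[where r = "\<lambda>j. cmod (d (Suc j) / d j)"])
    show "simple_closed_chain n v"
      using simple_closed_chain_of_simple_polygon[OF simple_polygon_linear_image[OF simple]]
        linear_times[of "cis \<theta>"] unfolding v_def by (simp add: inj_on_def)
    show "\<forall>j. Im (v (Suc j) - v j) \<noteq> 0"
      using \<theta> edge_mod[of n P] \<open>n > 0\<close> unfolding edge_v d_def by (metis mod_less_divisor)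
    show "\<forall>j. v (Suc (Suc j)) - v (Suc j) =
        of_real (cmod (d (Suc j) / d j)) * cis (turn_angle n P (Suc j)) * (v (Suc j) - v j)"
    proof
      fix j
      have "d (Suc j) = of_real (cmod (d (Suc j) / d j)) * cis (turn_angle n P (Suc j)) * d j"
        using next_edge_turned[OF \<open>n > 0\<close>, of P j] d_nz[of j] unfolding d_def by simp
      then show "v (Suc (Suc j)) - v (Suc j) =
          of_real (cmod (d (Suc j) / d j)) * cis (turn_angle n P (Suc j)) * (v (Suc j) - v j)"
        unfolding edge_v by (simp add: mult_ac)
    qed
    show "\<forall>j. 0 < turn_angle n P j \<and> turn_angle n P j \<le> pi / 2"
      using left turn_periodic \<open>n > 0\<close> by (metis mod_less_divisor)
  qed (use d_nz \<open>n > 0\<close> in \<open>simp_all add: v_def\<close>)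
  then show ?thesis using sum_lessThan_Suc_cyclic[of "turn_angle n P" n] turn_angle_add_n[of n P 0] by simp
qed

lemma left_turning_polygon_turn_sum:
  assumes "n \<ge> 3" and nondeg: "\<forall>i<n. nxt n P i \<noteq> vtx n P i" and simple: "simple_polygon n P"
    and left: "\<forall>i<n. 0 < turn_angle n P i \<and> turn_angle n P i \<le> pi / 2"
  shows "(\<Sum>i<n. turn_angle n P i) = 2 * pi"
proof -
  have "n > 0" using assms by simp
  obtain k :: int where k: "(\<Sum>i<n. turn_angle n P i) = 2 * pi * of_int k"
    using turn_angle_sum_int[OF \<open>n > 0\<close> nondeg] by blast
  have "(\<Sum>i<n. turn_angle n P i) > 0" using left \<open>n > 0\<close> by (intro sum_pos) auto
  then have "k \<ge> 1" unfolding k by (simp add: zero_less_mult_iff)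
  moreover have "k < 2"
    using left_turning_polygon_turn_sum_lt_4pi[OF \<open>n > 0\<close> nondeg simple left] unfolding k by simp
  ultimately show ?thesis using k by simp
qed

lemma turn_angle_cnj:
  assumes "turn_angle n P i \<noteq> 0" "turn_angle n P i \<noteq> pi"
  shows "turn_angle n (\<lambda>j. cnj (P j)) i = - turn_angle n P i"
proof -
  define z where "z = (nxt n P i - vtx n P i) / (vtx n P i - prv n P i)"
  have "z \<notin> \<real>"
    using assms Arg_real[of z] unfolding turn_angle_def z_def[symmetric] by (auto split: if_splits)
  moreover have "turn_angle n (\<lambda>j. cnj (P j)) i = Arg (cnj z)"
    unfolding turn_angle_def z_def nxt_def vtx_def prv_def by simp
  ultimately show ?thesis unfolding turn_angle_def z_def[symmetric] by (simp add: Arg_cnj)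
qed

lemma simple_polygon_turn_sum:
  assumes "n \<ge> 3" and nondeg: "\<forall>i<n. nxt n P i \<noteq> vtx n P i" and simple: "simple_polygon n P"
    and s: "s = 1 \<or> s = -1" and turns: "\<forall>i<n. 0 < s * turn_angle n P i \<and> s * turn_angle n P i \<le> pi / 2"
  shows "(\<Sum>i<n. s * turn_angle n P i) = 2 * pi"
proof (cases "s = 1")
  case True
  then show ?thesis using left_turning_polygon_turn_sum[OF assms(1-3)] turns by simp
next
  case False
  then have "s = -1" using s by simp
  define Q where "Q j = cnj (P j)" for j
  have turn_Q: "turn_angle n Q i = - turn_angle n P i" if "i < n" for i
    unfolding Q_def using turn_angle_cnj[of n P i] turns that pi_gt_zero \<open>s = -1\<close> by force
  have "(\<Sum>i<n. turn_angle n Q i) = 2 * pi"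
  proof (rule left_turning_polygon_turn_sum[OF assms(1)])
    show "\<forall>i<n. nxt n Q i \<noteq> vtx n Q i" using nondeg unfolding Q_def nxt_def vtx_def by simp
    show "simple_polygon n Q"
      unfolding Q_def by (rule simple_polygon_linear_image[OF simple linear_cnj]) (simp add: inj_on_def)
    show "\<forall>i<n. 0 < turn_angle n Q i \<and> turn_angle n Q i \<le> pi / 2"
      using turns turn_Q \<open>s = -1\<close> by simp
  qed
  then show ?thesis using turn_Q \<open>s = -1\<close> by simp
qed

section \<open>Fold lines and the lower bound\<close>

lemma cis_double_minus_1: "cis (2 * \<phi>) - 1 = cis \<phi> * (\<i> * of_real (2 * sin \<phi>))"
  using cos_double_sin[of \<phi>] sin_double[of \<phi>] unfolding complex_eq_iff
  by (simp add: power2_eq_square algebra_simps)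

text \<open>In the frame of either adjacent edge, the half fold line at a vertex with incoming edge
  \<open>a\<close>, outgoing edge \<open>b\<close> and turn \<open>\<tau>\<close> has normal component \<open>w/2\<close> and tangential component
  \<open>w/2 * cot\<close> of half the turn.\<close>
lemma fold_half_vector:
  fixes a b :: complex and s \<tau> w :: real
  assumes "a \<noteq> 0" "b \<noteq> 0" "\<tau> = Arg (b / a)"
    and s: "s = 1 \<or> s = -1" and turn: "0 < s * \<tau>" "s * \<tau> \<le> pi / 2"
  defines "h \<equiv> of_real ((w / 2) / cos ((pi - s * \<tau>) / 2)) * (\<i> * sgn (sgn b + sgn (- a)))"
  shows "h = of_real (w / 2) * sgn b * (\<i> - of_real (s * cot (s * \<tau> / 2)))"
    and "h = - of_real (w / 2) * sgn a * (\<i> + of_real (s * cot (s * \<tau> / 2)))"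
proof -
  define \<phi> where "\<phi> = \<tau> / 2"
  have sin: "sgn (sin \<phi>) = s" unfolding \<phi>_def
    using s turn sin_gt_zero[of "\<tau> / 2"] sin_gt_zero[of "- \<tau> / 2"] by auto
  then have "sin \<phi> \<noteq> 0" "s \<noteq> 0" "s * s = 1" using s by auto
  have "cos ((pi - s * \<tau>) / 2) = sin (s * \<phi>)"
    using sin_cos_eq[of "s * \<phi>"] unfolding \<phi>_def by (simp add: diff_divide_distrib)
  then have cos: "cos ((pi - s * \<tau>) / 2) = s * sin \<phi>" using s by auto
  have cot: "s * cot (s * \<tau> / 2) = cot \<phi>" using s unfolding \<phi>_def cot_def by auto
  have "cis (2 * \<phi>) = sgn (b / a)" using assms(1-3) cis_Arg[of "b / a"] unfolding \<phi>_def by simp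
  then have "sgn b / sgn a = cis (2 * \<phi>)" by (simp only: sgn_divide)
  then have b: "sgn b = sgn a * cis (2 * \<phi>)"
    using assms(1) by (simp add: divide_eq_eq sgn_zero_iff mult.commute)
  have "sgn b + sgn (- a) = sgn a * (cis (2 * \<phi>) - 1)" unfolding b by (simp add: algebra_simps)
  also have "\<dots> = sgn a * cis \<phi> * \<i> * of_real (2 * sin \<phi>)"
    unfolding cis_double_minus_1 by (simp only: mult_ac)
  finally have "sgn (sgn b + sgn (- a)) = sgn (sgn a * cis \<phi> * \<i> * of_real (2 * sin \<phi>))" by simp
  also have "\<dots> = sgn a * cis \<phi> * \<i> * of_real s"
    using sin assms(1) sgn_div_norm[of \<i>] sgn_div_norm[of "2::complex"]
    by (simp add: sgn_mult sgn_of_real norm_sgn)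
  finally have h: "h = - of_real (w / 2) * (sgn a * cis \<phi>) / of_real (sin \<phi>)"
    unfolding h_def cos using \<open>sin \<phi> \<noteq> 0\<close> \<open>s \<noteq> 0\<close> \<open>s * s = 1\<close> by (simp add: field_simps)
  have C: "cis \<phi> / of_real (sin \<phi>) = of_real (cot \<phi>) + \<i>"
    "cis (- \<phi>) / of_real (sin \<phi>) = of_real (cot \<phi>) - \<i>"
    using \<open>sin \<phi> \<noteq> 0\<close> by (simp_all add: complex_eq_iff cot_def)
  have "sgn a * cis \<phi> = sgn b * cis (- \<phi>)" unfolding b by (simp add: mult.assoc cis_mult)
  then have "h = - of_real (w / 2) * sgn b * (cis (- \<phi>) / of_real (sin \<phi>))"
    "h = - of_real (w / 2) * sgn a * (cis \<phi> / of_real (sin \<phi>))"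
    unfolding h by simp_all
  then have "h = - of_real (w / 2) * sgn b * (of_real (cot \<phi>) - \<i>)"
    "h = - of_real (w / 2) * sgn a * (of_real (cot \<phi>) + \<i>)"
    unfolding C by simp_all
  then show "h = of_real (w / 2) * sgn b * (\<i> - of_real (s * cot (s * \<tau> / 2)))"
    "h = - of_real (w / 2) * sgn a * (\<i> + of_real (s * cot (s * \<tau> / 2)))"
    unfolding cot by (simp_all add: algebra_simps)
qed

lemma fold_line_eq:
  assumes "vtx n P i \<noteq> prv n P i" "nxt n P i \<noteq> vtx n P i"
    and s: "s = sgn (signed_area n P)" "s = 1 \<or> s = -1"
    and turn: "0 < s * turn_angle n P i" "s * turn_angle n P i \<le> pi / 2"
  defines "c \<equiv> cot (s * turn_angle n P i / 2)"
  shows "fold_line n P w i = closed_segment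
      (vtx n P i - of_real (w / 2) * sgn (nxt n P i - vtx n P i) * (\<i> - of_real (s * c)))
      (vtx n P i + of_real (w / 2) * sgn (nxt n P i - vtx n P i) * (\<i> - of_real (s * c)))"
    and "fold_line n P w i = closed_segment
      (vtx n P i - of_real (w / 2) * sgn (vtx n P i - prv n P i) * (\<i> + of_real (s * c)))
      (vtx n P i + of_real (w / 2) * sgn (vtx n P i - prv n P i) * (\<i> + of_real (s * c)))"
proof -
  define V where "V = vtx n P i"
  define hd where "hd = of_real ((w / 2) / cos (interior_angle n P i / 2)) * (\<i> * sgn (bisector_dir n P i))"
  have fold: "fold_line n P w i = closed_segment (V - hd) (V + hd)"
    unfolding fold_line_def Let_def hd_def V_def ..
  have bisector: "bisector_dir n P i = sgn (nxt n P i - vtx n P i) + sgn (- (vtx n P i - prv n P i))"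
    unfolding bisector_dir_def by simp
  have interior: "interior_angle n P i / 2 = (pi - s * turn_angle n P i) / 2"
    unfolding interior_angle_def s(1) ..
  note half = fold_half_vector[OF _ _ turn_angle_def s(2) turn, of w]
  have hd1: "hd = of_real (w / 2) * sgn (nxt n P i - vtx n P i) * (\<i> - of_real (s * c))"
    and hd2: "hd = - of_real (w / 2) * sgn (vtx n P i - prv n P i) * (\<i> + of_real (s * c))"
    unfolding hd_def bisector interior c_def by (rule half; use assms(1,2) in simp)+
  show "fold_line n P w i = closed_segment
      (vtx n P i - of_real (w / 2) * sgn (nxt n P i - vtx n P i) * (\<i> - of_real (s * c)))
      (vtx n P i + of_real (w / 2) * sgn (nxt n P i - vtx n P i) * (\<i> - of_real (s * c)))"
    unfolding fold V_def hd1 ..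
  have "V - hd = V + of_real (w / 2) * sgn (vtx n P i - prv n P i) * (\<i> + of_real (s * c))"
    "V + hd = V - of_real (w / 2) * sgn (vtx n P i - prv n P i) * (\<i> + of_real (s * c))"
    unfolding hd2 by simp_all
  then show "fold_line n P w i = closed_segment
      (vtx n P i - of_real (w / 2) * sgn (vtx n P i - prv n P i) * (\<i> + of_real (s * c)))
      (vtx n P i + of_real (w / 2) * sgn (vtx n P i - prv n P i) * (\<i> + of_real (s * c)))"
    unfolding fold V_def by (simp only: closed_segment_commute)
qed

lemma centred_in_closed_segment:
  fixes V X :: complex
  assumes "\<bar>t\<bar> \<le> 1"
  shows "V + of_real t * X \<in> closed_segment (V - X) (V + X)"
  unfolding in_segment using assms
  by (intro exI[of _ "(t + 1) / 2"]) (auto simp: scaleR_conv_of_real complex_eq_iff field_simps)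

text \<open>Fold lines at the two ends of an edge of length \<open>L\<close> with direction \<open>e\<close>: each reaches
  \<open>w/2 * c\<close> resp. \<open>w/2 * c'\<close> along the edge, so they cross unless the edge is longer.\<close>
lemma fold_segments_meet:
  fixes V e :: complex and s c c' w L :: real
  assumes s: "s = 1 \<or> s = -1" and pos: "0 < c" "0 < c'" "0 < w" and L: "0 \<le> L" "L \<le> w / 2 * (c + c')"
  defines "X \<equiv> of_real (w / 2) * e * (\<i> - of_real (s * c))"
    and "Y \<equiv> of_real (w / 2) * e * (\<i> + of_real (s * c'))"
    and "W \<equiv> V + of_real L * e"
  shows "closed_segment (V - X) (V + X) \<inter> closed_segment (W - Y) (W + Y) \<noteq> {}"
proof -
  define t where "t = - s * L / (w / 2 * (c + c'))"
  have "\<bar>t\<bar> \<le> 1" using s pos L unfolding t_def by (auto simp: abs_mult abs_divide)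
  have "w / 2 * (c + c') \<noteq> 0" using pos by auto
  then have "t * (- (w / 2 * s * (c + c'))) = (s * s) * L" unfolding t_def by (simp add: field_simps)
  then have "t * (- (w / 2 * s * (c + c'))) = L" using s by auto
  moreover have "X - Y = - of_real (w / 2 * s * (c + c')) * e"
    unfolding X_def Y_def by (simp add: field_simps)
  ultimately have "of_real t * (X - Y) = of_real L * e" by (metis mult.assoc mult_minus_left of_real_mult of_real_minus)
  then have "V + of_real t * X = W + of_real t * Y" unfolding W_def by (simp add: algebra_simps)
  moreover have "V + of_real t * X \<in> closed_segment (V - X) (V + X)"
    "W + of_real t * Y \<in> closed_segment (W - Y) (W + Y)"
    using centred_in_closed_segment[OF \<open>\<bar>t\<bar> \<le> 1\<close>] by blast+
  ultimately show ?thesis by (metis IntI empty_iff)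
qed

lemma vtx_Suc_mod: "vtx n P (Suc i mod n) = nxt n P i"
  unfolding vtx_def nxt_def by simp

lemma prv_Suc_mod:
  assumes "n > 0"
  shows "prv n P (Suc i mod n) = vtx n P i"
proof -
  have "(Suc i mod n + n - 1) mod n = (Suc i mod n + (n - 1)) mod n" using assms by simp
  also have "\<dots> = (Suc i + (n - 1)) mod n" by (simp add: mod_add_left_eq)
  also have "Suc i + (n - 1) = i + n" using assms by simp
  finally show ?thesis unfolding prv_def vtx_def by simp
qed

lemma prv_ne_vtx:
  assumes "n > 0" and nondeg: "\<forall>j<n. nxt n P j \<noteq> vtx n P j"
  shows "vtx n P i \<noteq> prv n P i"
proof -
  define k where "k = (i + n - 1) mod n"
  have "Suc k mod n = (i + n) mod n"
    unfolding k_def using assms(1) by (simp add: mod_Suc_eq)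
  then have "nxt n P k = vtx n P i" "prv n P i = vtx n P k"
    unfolding nxt_def vtx_def prv_def k_def by simp_all
  moreover have "k < n" unfolding k_def using assms(1) by simp
  ultimately show ?thesis using nondeg by metis
qed

lemma edge_longer_than_fold_offsets:
  assumes "n \<ge> 3" "i < n" and nondeg: "\<forall>j<n. nxt n P j \<noteq> vtx n P j"
    and s: "s = sgn (signed_area n P)" "s = 1 \<or> s = -1"
    and turns: "\<forall>j<n. 0 < s * turn_angle n P j \<and> s * turn_angle n P j \<le> pi / 2"
    and ribbon: "folded_ribbon n P w"
  shows "w / 2 * (cot (s * turn_angle n P i / 2) + cot (s * turn_angle n P (Suc i mod n) / 2))
    < cmod (nxt n P i - vtx n P i)"
proof (rule ccontr)
  assume short: "\<not> ?thesis"
  define j where "j = Suc i mod n"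
  have "j < n" "i \<noteq> j" unfolding j_def using assms(1,2) by (auto simp: mod_Suc)
  define c c' where "c = cot (s * turn_angle n P i / 2)" and "c' = cot (s * turn_angle n P j / 2)"
  have "0 < c" "0 < c'" unfolding c_def c'_def
    using turns[rule_format, of i] turns[rule_format, of j] assms(2) \<open>j < n\<close>
    by (auto intro!: cot_gt_zero)
  have "0 < w" using ribbon unfolding folded_ribbon_def by simp
  define e L where "e = sgn (nxt n P i - vtx n P i)" and "L = cmod (nxt n P i - vtx n P i)"
  have "n > 0" "nxt n P i \<noteq> vtx n P i" using assms(1,2) nondeg by auto
  then have next_vtx: "vtx n P j = vtx n P i + of_real L * e"
    and "vtx n P j - prv n P j = nxt n P i - vtx n P i"
    unfolding j_def e_def L_def vtx_Suc_mod prv_Suc_mod[OF \<open>n > 0\<close>]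
    by (simp_all add: sgn_div_norm scaleR_conv_of_real field_simps)
  have "fold_line n P w i = closed_segment
      (vtx n P i - of_real (w / 2) * e * (\<i> - of_real (s * c)))
      (vtx n P i + of_real (w / 2) * e * (\<i> - of_real (s * c)))"
    unfolding e_def c_def using prv_ne_vtx[OF _ nondeg] nondeg turns assms(1,2) s
    by (intro fold_line_eq(1)) auto
  moreover have "fold_line n P w j = closed_segment
      (vtx n P j - of_real (w / 2) * e * (\<i> + of_real (s * c')))
      (vtx n P j + of_real (w / 2) * e * (\<i> + of_real (s * c')))"
    unfolding e_def c'_def \<open>vtx n P j - prv n P j = _\<close>[symmetric]
    using prv_ne_vtx[OF _ nondeg] nondeg turns assms(1) \<open>j < n\<close> s
    by (intro fold_line_eq(2)) auto
  moreover have "L \<le> w / 2 * (c + c')" using short unfolding L_def c_def c'_def j_def by simp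
  ultimately have "fold_line n P w i \<inter> fold_line n P w j \<noteq> {}"
    unfolding next_vtx using fold_segments_meet[OF s(2) \<open>0 < c\<close> \<open>0 < c'\<close> \<open>0 < w\<close>] L_def by simp
  then show False using ribbon assms(2) \<open>j < n\<close> \<open>i \<noteq> j\<close> unfolding folded_ribbon_def by blast
qed

lemma convex_on_cot: "convex_on {0<..pi / 2} cot"
proof (rule convex_on_realI[where f' = "\<lambda>x. - inverse ((sin x)\<^sup>2)"])
  fix x y :: real
  assume "x \<in> {0<..pi / 2}" "y \<in> {0<..pi / 2}" "x \<le> y"
  then have "0 < sin x" "sin x \<le> sin y" by (auto intro: sin_gt_zero sin_monotone_2pi_le)
  then show "- inverse ((sin x)\<^sup>2) \<le> - inverse ((sin y)\<^sup>2)"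
    by (simp add: le_imp_inverse_le power_mono)
next
  fix x :: real
  assume "x \<in> {0<..pi / 2}"
  then have "0 < sin x" by (intro sin_gt_zero) auto
  then have "sin x \<noteq> 0" by simp
  then show "(cot has_real_derivative - inverse ((sin x)\<^sup>2)) (at x)" by (rule DERIV_cot)
qed simp

lemma sum_cot_ge:
  fixes x :: "nat \<Rightarrow> real"
  assumes "n > 0" "\<forall>i<n. 0 < x i \<and> x i \<le> pi / 2"
  shows "real n * cot ((\<Sum>i<n. x i) / real n) \<le> (\<Sum>i<n. cot (x i))"
proof -
  have "cot (\<Sum>i<n. (1 / real n) *\<^sub>R x i) \<le> (\<Sum>i<n. (1 / real n) * cot (x i))"
    by (rule convex_on_sum[OF _ _ convex_on_cot]) (use assms in auto)
  then show ?thesis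
    using assms(1) by (simp add: sum_divide_distrib[symmetric] sum_distrib_left[symmetric] field_simps)
qed

lemma ribbonlength_ge_n_cot:
  assumes "n \<ge> 4" and nondeg: "nondegenerate_polygon n P" and simple: "simple_polygon n P"
    and angles: "\<forall>i<n. pi / 2 \<le> interior_angle n P i \<and> interior_angle n P i < pi"
    and ribbon: "folded_ribbon n P w"
  shows "real n * cot (pi / real n) \<le> ribbonlength n P w"
proof -
  have "n > 0" using assms(1) by simp
  have edges: "\<forall>i<n. nxt n P i \<noteq> vtx n P i" using nondeg unfolding nondegenerate_polygon_def by auto
  define s where "s = sgn (signed_area n P)"
  have turns: "\<forall>i<n. 0 < s * turn_angle n P i \<and> s * turn_angle n P i \<le> pi / 2"
    using angles unfolding interior_angle_def s_def[symmetric] by auto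
  then have "s \<noteq> 0" using \<open>n > 0\<close> by fastforce
  then have s: "s = 1 \<or> s = -1" unfolding s_def by (auto simp: sgn_real_def split: if_splits)
  have total: "(\<Sum>i<n. s * turn_angle n P i) = 2 * pi"
    using simple_polygon_turn_sum[OF _ edges simple s turns] assms(1) by simp
  define f where "f i = cot (s * turn_angle n P i / 2)" for i
  have f_cyclic: "(\<Sum>i<n. f (Suc i)) = (\<Sum>i<n. f i)"
    by (rule sum_lessThan_Suc_cyclic) (use turn_angle_add_n[of n P 0] in \<open>simp add: f_def\<close>)
  have "f (Suc i mod n) = f (Suc i)" for i
    using periodic_mod[of "turn_angle n P" n "Suc i"] turn_angle_add_n unfolding f_def by simp
  then have "w / 2 * (f i + f (Suc i)) < cmod (nxt n P i - vtx n P i)" if "i < n" for i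
    using edge_longer_than_fold_offsets[OF _ that edges s_def s turns ribbon] assms(1)
    unfolding f_def by simp
  then have "(\<Sum>i<n. w / 2 * (f i + f (Suc i))) < polygon_length n P"
    unfolding polygon_length_def using \<open>n > 0\<close> by (intro sum_strict_mono) auto
  also have "(\<Sum>i<n. w / 2 * (f i + f (Suc i))) = w / 2 * ((\<Sum>i<n. f i) + (\<Sum>i<n. f (Suc i)))"
    by (simp only: sum_distrib_left[symmetric] sum.distrib)
  also have "\<dots> = w * (\<Sum>i<n. f i)" unfolding f_cyclic by simp
  finally have length: "w * (\<Sum>i<n. f i) < polygon_length n P" .
  have "\<forall>i<n. 0 < s * turn_angle n P i / 2 \<and> s * turn_angle n P i / 2 \<le> pi / 2"
    using turns by auto
  then have "real n * cot ((\<Sum>i<n. s * turn_angle n P i / 2) / real n) \<le> (\<Sum>i<n. f i)"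
    unfolding f_def by (rule sum_cot_ge[OF \<open>n > 0\<close>])
  moreover have "(\<Sum>i<n. s * turn_angle n P i / 2) = pi"
    using total by (simp add: sum_divide_distrib[symmetric])
  ultimately have "real n * cot (pi / real n) \<le> (\<Sum>i<n. f i)" by simp
  moreover have "0 < w" using ribbon unfolding folded_ribbon_def by simp
  ultimately have "w * (real n * cot (pi / real n)) \<le> polygon_length n P"
    using length by (smt (verit) mult_left_mono)
  then show ?thesis using \<open>0 < w\<close> unfolding ribbonlength_def by (simp add: field_simps)
qed

section \<open>Regular polygons\<close>

definition regular_vertex :: "nat \<Rightarrow> nat \<Rightarrow> complex" where
  "regular_vertex n k = cis (2 * pi * real k / real n)"

lemma norm_regular_vertex [simp]: "cmod (regular_vertex n k) = 1"
  unfolding regular_vertex_def by simp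

lemma regular_vertex_Suc: "regular_vertex n (Suc k) = regular_vertex n k * cis (2 * pi / real n)"
  unfolding regular_vertex_def cis_mult
  by (rule arg_cong[where f = cis]) (simp add: add_divide_distrib distrib_left)

lemma regular_vertex_mod:
  assumes "n > 0"
  shows "regular_vertex n (k mod n) = regular_vertex n k"
proof (rule periodic_mod, intro allI)
  fix j
  have "2 * pi * real (j + n) / real n = 2 * pi * real j / real n + 2 * pi"
    using assms by (simp add: field_simps)
  then show "regular_vertex n (j + n) = regular_vertex n j"
    unfolding regular_vertex_def by (simp add: cis_mult[symmetric])
qed

lemma regular_polygon_regular_vertex: "regular_polygon n (regular_vertex n)"
  unfolding regular_polygon_def regular_vertex_def
  by (rule exI[of _ 0], rule exI[of _ 1], rule exI[of _ 0]) simp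

lemma cos_two_pi_distinct_le:
  assumes "i < n" "j < n" "i \<noteq> j"
  shows "cos (2 * pi * (real j - real i) / real n) \<le> cos (2 * pi / real n)"
proof -
  define k where "k = (if i < j then j - i else i - j)"
  have k: "1 \<le> k" "k < n" unfolding k_def using assms by auto
  have even: "cos (2 * pi * (real j - real i) / real n) = cos (2 * pi * real k / real n)"
  proof (cases "i < j")
    case False
    then have "2 * pi * (real j - real i) / real n = - (2 * pi * real k / real n)"
      unfolding k_def by (simp add: of_nat_diff right_diff_distrib diff_divide_distrib)
    then show ?thesis by simp
  qed (simp add: k_def of_nat_diff)
  have mono: "cos (2 * pi * real m / real n) \<le> cos (2 * pi / real n)"
    if "1 \<le> m" "2 * pi * real m / real n \<le> pi" for m :: nat
    using that k by (intro cos_monotone_0_pi_le) (auto simp: divide_right_mono)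
  show ?thesis
  proof (cases "2 * pi * real k / real n \<le> pi")
    case False
    have "2 * pi * real (n - k) / real n = 2 * pi - 2 * pi * real k / real n"
      using k by (simp add: of_nat_diff field_simps)
    then show ?thesis using mono[of "n - k"] False k unfolding even by (simp add: cos_2pi_minus)
  qed (use mono k even in simp)
qed

lemma Re_rotation_of_tangent_point:
  fixes \<rho> :: complex and t1 t2 :: real
  assumes "cmod \<rho> = 1" and eq: "1 + \<i> * of_real t1 = \<rho> * (1 + \<i> * of_real t2)"
  shows "1 - t2 * t2 \<le> Re \<rho> * (1 + t2 * t2)"
proof -
  define a b where "a = Re \<rho>" and "b = Im \<rho>"
  have "a * a + b * b = 1" using assms(1) cmod_power2[of \<rho>] unfolding a_def b_def
    by (simp add: power2_eq_square)
  have re: "1 = a - b * t2" and im: "t1 = b + a * t2"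
    using eq unfolding a_def b_def complex_eq_iff by simp_all
  have "t1 * t1 + (a - b * t2) * (a - b * t2) = (a * a + b * b) * (1 + t2 * t2)"
    unfolding im by algebra
  then have "t1 * t1 = t2 * t2" unfolding re[symmetric] \<open>a * a + b * b = 1\<close> by simp
  have "0 \<le> (t1 + t2) * (t1 + t2)" by simp
  also have "\<dots> = 2 * (t2 * t2) + 2 * (t1 * t2)" using \<open>t1 * t1 = t2 * t2\<close> by algebra
  finally have "- (t2 * t2) \<le> t1 * t2" by simp
  moreover have "a * (1 + t2 * t2) = (a - b * t2) + t1 * t2" unfolding im by algebra
  then have "a * (1 + t2 * t2) = 1 + t1 * t2" unfolding re[symmetric] .
  ultimately show ?thesis unfolding a_def by linarith
qed

lemma cis_times_i_cot:
  assumes "sin \<phi> \<noteq> 0"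
  shows "cis \<phi> * \<i> * (\<i> - of_real (cot \<phi>)) = - \<i> / of_real (sin \<phi>)"
proof -
  have "- sin \<phi> - cos \<phi> * (cos \<phi> / sin \<phi>) = - ((sin \<phi>)\<^sup>2 + (cos \<phi>)\<^sup>2) / sin \<phi>"
    using assms by (simp add: field_simps power2_eq_square del: sin_cos_squared_add3 sin_cos_squared_add)
  then have "- sin \<phi> - cos \<phi> * (cos \<phi> / sin \<phi>) = - 1 / sin \<phi>" by simp
  then show ?thesis unfolding complex_eq_iff cot_def using assms by (simp add: field_simps)
qed

context
  fixes n :: nat
  assumes n: "n \<ge> 4"
begin

lemma pi_div_n_bounds: "0 < pi / real n" "pi / real n \<le> pi / 4"
proof -
  show "0 < pi / real n" using n by simp
  show "pi / real n \<le> pi / 4" using n by (intro divide_left_mono) auto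
qed

lemma sin_cos_pi_div_n_pos: "0 < sin (pi / real n)" "0 < cos (pi / real n)"
  "0 < sin (2 * pi / real n)"
proof -
  have a: "0 < pi / real n" "pi / real n < pi" "pi / real n < pi / 2" "- (pi / 2) < pi / real n"
    and b: "0 < 2 * (pi / real n)" "2 * (pi / real n) < pi"
    using pi_div_n_bounds pi_gt_zero by linarith+
  show "0 < sin (pi / real n)" using a(1,2) by (rule sin_gt_zero)
  show "0 < cos (pi / real n)" using a(1,3) by (rule cos_gt_zero)
  show "0 < sin (2 * pi / real n)" using sin_gt_zero[OF b] by simp
qed

lemma regular_vertex_ne_0: "regular_vertex n k \<noteq> 0"
  using norm_regular_vertex[of n k] by (metis norm_zero zero_neq_one)

lemma regular_vertex_add_n: "regular_vertex n (k + n) = regular_vertex n k"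
  using regular_vertex_mod[of n "k + n"] regular_vertex_mod[of n k] n by simp

lemma vtx_regular: "vtx n (regular_vertex n) k = regular_vertex n k"
  unfolding vtx_def using n by (simp add: regular_vertex_mod)

lemma nxt_regular: "nxt n (regular_vertex n) k = regular_vertex n k * cis (2 * pi / real n)"
  unfolding nxt_def using n by (simp add: regular_vertex_mod regular_vertex_Suc)

lemma prv_regular: "prv n (regular_vertex n) k * cis (2 * pi / real n) = regular_vertex n k"
proof -
  have "prv n (regular_vertex n) k * cis (2 * pi / real n) = regular_vertex n (Suc (k + n - 1))"
    unfolding prv_def regular_vertex_Suc using n by (simp add: regular_vertex_mod)
  also have "Suc (k + n - 1) = k + n" using n by simp
  finally show ?thesis using regular_vertex_add_n by simp
qed

lemma edge_regular:
  "nxt n (regular_vertex n) k - vtx n (regular_vertex n) k =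
     regular_vertex n k * cis (pi / real n) * \<i> * of_real (2 * sin (pi / real n))"
  unfolding nxt_regular vtx_regular
  using cis_double_minus_1[of "pi / real n"] by (simp add: algebra_simps)

lemma edge_regular_ne: "nxt n (regular_vertex n) k \<noteq> vtx n (regular_vertex n) k"
  using edge_regular[of k] sin_cos_pi_div_n_pos(1) regular_vertex_ne_0 by force

lemma prv_ne_vtx_regular: "vtx n (regular_vertex n) k \<noteq> prv n (regular_vertex n) k"
  using prv_ne_vtx[of n "regular_vertex n" k] edge_regular_ne n by simp

lemma signed_area_regular: "0 < signed_area n (regular_vertex n)"
proof -
  have "Im (cnj (vtx n (regular_vertex n) k) * nxt n (regular_vertex n) k) = sin (2 * pi / real n)"
    for k
    unfolding vtx_regular nxt_regular
    using complex_norm_square[of "regular_vertex n k"]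
    by (simp add: mult.assoc[symmetric] mult.commute[of "cnj _"])
  then show ?thesis unfolding signed_area_def using n sin_cos_pi_div_n_pos(3) by simp
qed

lemma turn_angle_regular: "turn_angle n (regular_vertex n) k = 2 * pi / real n"
proof -
  define \<omega> p where "\<omega> = cis (2 * pi / real n)" and "p = prv n (regular_vertex n) k"
  have "p * \<omega> = regular_vertex n k" unfolding p_def \<omega>_def by (rule prv_regular)
  moreover have "\<omega> \<noteq> 1" using sin_cos_pi_div_n_pos(3) unfolding \<omega>_def by (auto simp: complex_eq_iff)
  moreover have "p \<noteq> 0" using calculation(1) regular_vertex_ne_0 by auto
  ultimately have "(regular_vertex n k * \<omega> - regular_vertex n k) / (regular_vertex n k - p) = \<omega>"
    unfolding \<open>p * \<omega> = regular_vertex n k\<close>[symmetric] by (simp add: field_simps)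
  then have "turn_angle n (regular_vertex n) k = Arg \<omega>"
    unfolding turn_angle_def nxt_regular vtx_regular p_def[symmetric] \<omega>_def[symmetric] by simp
  moreover have "0 < 2 * (pi / real n)" "2 * (pi / real n) \<le> pi"
    using pi_div_n_bounds pi_gt_zero by linarith+
  then have "2 * pi / real n \<in> {-pi<..pi}" by simp
  ultimately show ?thesis unfolding \<omega>_def by (simp add: Arg_cis)
qed

lemma sgn_edge_regular:
  "sgn (nxt n (regular_vertex n) k - vtx n (regular_vertex n) k) =
    regular_vertex n k * cis (pi / real n) * \<i>"
proof -
  have "sgn (regular_vertex n k) = regular_vertex n k" "sgn (cis (pi / real n)) = cis (pi / real n)"
    "sgn \<i> = \<i>"
    by (simp_all add: sgn_div_norm)
  moreover have "sgn (complex_of_real (2 * sin (pi / real n))) = 1"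
    using sin_cos_pi_div_n_pos(1) by (subst sgn_of_real) simp
  ultimately show ?thesis unfolding edge_regular by (simp only: sgn_mult mult_1_right)
qed

lemma fold_line_regular:
  fixes w :: real
  defines "h \<equiv> (w / 2) / sin (pi / real n)"
  shows "fold_line n (regular_vertex n) w k = closed_segment
    (regular_vertex n k - of_real h * (\<i> * regular_vertex n k))
    (regular_vertex n k + of_real h * (\<i> * regular_vertex n k))"
proof -
  define \<phi> E where "\<phi> = pi / real n" and "E = regular_vertex n k"
  have "0 < 2 * (pi / real n)" "2 * (pi / real n) \<le> pi / 2" using pi_div_n_bounds by linarith+
  then have turn: "0 < 1 * turn_angle n (regular_vertex n) k" "1 * turn_angle n (regular_vertex n) k \<le> pi / 2"
    unfolding turn_angle_regular by simp_all
  have "cot (1 * turn_angle n (regular_vertex n) k / 2) = cot \<phi>"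
    unfolding turn_angle_regular \<phi>_def by simp
  then have "fold_line n (regular_vertex n) w k = closed_segment
      (E - of_real (w / 2) * (E * cis \<phi> * \<i>) * (\<i> - of_real (1 * cot \<phi>)))
      (E + of_real (w / 2) * (E * cis \<phi> * \<i>) * (\<i> - of_real (1 * cot \<phi>)))"
    using fold_line_eq(1)[of n "regular_vertex n" k 1 w, OF prv_ne_vtx_regular edge_regular_ne _ _ turn]
      signed_area_regular sgn_edge_regular[of k, unfolded vtx_regular, folded E_def \<phi>_def]
    unfolding vtx_regular E_def[symmetric] \<phi>_def[symmetric] by simp
  moreover have "of_real (w / 2) * (E * cis \<phi> * \<i>) * (\<i> - of_real (1 * cot \<phi>)) = - of_real h * (\<i> * E)"
  proof -
    have "sin \<phi> \<noteq> 0" using sin_cos_pi_div_n_pos(1) unfolding \<phi>_def by simp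
    have "of_real (w / 2) * (E * cis \<phi> * \<i>) * (\<i> - of_real (1 * cot \<phi>))
        = of_real (w / 2) * E * (cis \<phi> * \<i> * (\<i> - of_real (cot \<phi>)))"
      by (simp only: mult_1_left mult.assoc)
    also have "\<dots> = - of_real ((w / 2) / sin \<phi>) * (\<i> * E)"
      unfolding cis_times_i_cot[OF \<open>sin \<phi> \<noteq> 0\<close>] using \<open>sin \<phi> \<noteq> 0\<close> by (simp add: field_simps)
    finally show ?thesis unfolding h_def \<phi>_def .
  qed
  ultimately show ?thesis unfolding E_def by (simp add: closed_segment_commute)
qed

lemma fold_line_regular_point:
  assumes "0 \<le> w" "z \<in> fold_line n (regular_vertex n) w k"
  obtains t where "\<bar>t\<bar> \<le> (w / 2) / sin (pi / real n)" "z = regular_vertex n k * (1 + \<i> * of_real t)"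
proof -
  define h where "h = (w / 2) / sin (pi / real n)"
  have "0 \<le> h" unfolding h_def using assms(1) sin_cos_pi_div_n_pos by simp
  obtain u where u: "0 \<le> u" "u \<le> 1"
    "z = (1 - u) *\<^sub>R (regular_vertex n k - of_real h * (\<i> * regular_vertex n k))
       + u *\<^sub>R (regular_vertex n k + of_real h * (\<i> * regular_vertex n k))"
    using assms(2) unfolding fold_line_regular h_def[symmetric] in_segment by blast
  show thesis
  proof (rule that[of "(2 * u - 1) * h"])
    show "\<bar>(2 * u - 1) * h\<bar> \<le> (w / 2) / sin (pi / real n)"
      using u(1,2) \<open>0 \<le> h\<close> unfolding h_def[symmetric] by (auto simp: abs_mult intro: mult_left_le_one_le)
    show "z = regular_vertex n k * (1 + \<i> * of_real ((2 * u - 1) * h))"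
      unfolding u(3) by (simp add: scaleR_conv_of_real algebra_simps)
  qed
qed

text \<open>The fold lines of the regular \<open>n\<close>-gon inscribed in the unit circle lie on its
  tangent lines, and two tangent lines at vertices \<open>2 pi / n\<close> apart meet at distance
  \<open>tan (pi / n)\<close> from the points of tangency.\<close>
lemma regular_tangents_apart:
  assumes ij: "i < n" "j < n" "i \<noteq> j" and t2: "\<bar>t2\<bar> < tan (pi / real n)"
    and eq: "regular_vertex n i * (1 + \<i> * of_real t1) = regular_vertex n j * (1 + \<i> * of_real t2)"
  shows False
proof -
  define \<phi> T where "\<phi> = pi / real n" and "T = tan \<phi>"
  define \<rho> where "\<rho> = regular_vertex n j * cnj (regular_vertex n i)"
  have "\<rho> = cis (2 * pi * (real j - real i) / real n)"
    unfolding \<rho>_def regular_vertex_def cis_cnj cis_mult by (simp add: diff_divide_distrib algebra_simps)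
  then have "cmod \<rho> = 1" "Re \<rho> \<le> cos (2 * \<phi>)"
    unfolding \<phi>_def using cos_two_pi_distinct_le[OF ij] by simp_all
  have "cnj (regular_vertex n i) * regular_vertex n i = 1"
    using complex_norm_square[of "regular_vertex n i"] by (simp add: mult.commute)
  then have "1 + \<i> * of_real t1 = \<rho> * (1 + \<i> * of_real t2)"
    using arg_cong[OF eq, of "\<lambda>z. cnj (regular_vertex n i) * z"] unfolding \<rho>_def
    by (simp add: mult.assoc[symmetric] mult.commute[of "cnj _"])
  then have "1 - t2 * t2 \<le> Re \<rho> * (1 + t2 * t2)"
    by (rule Re_rotation_of_tangent_point[OF \<open>cmod \<rho> = 1\<close>])
  also have "\<dots> \<le> cos (2 * \<phi>) * (1 + t2 * t2)"
    using \<open>Re \<rho> \<le> cos (2 * \<phi>)\<close> by (intro mult_right_mono) simp_all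
  also have "cos (2 * \<phi>) = (1 - T * T) / (1 + T * T)"
    unfolding T_def using cos_tan_half[of \<phi>] sin_cos_pi_div_n_pos \<phi>_def
    by (simp add: power2_eq_square)
  finally have "1 - t2 * t2 \<le> (1 - T * T) * (1 + t2 * t2) / (1 + T * T)" by simp
  moreover have "0 < 1 + T * T" by (simp add: add_pos_nonneg)
  ultimately have "(1 - t2 * t2) * (1 + T * T) \<le> (1 - T * T) * (1 + t2 * t2)"
    by (simp add: pos_le_divide_eq)
  moreover have "0 < T" unfolding T_def \<phi>_def
    using sin_cos_pi_div_n_pos by (simp add: tan_def)
  then have "\<bar>t2\<bar> * \<bar>t2\<bar> < T * T" using t2 unfolding T_def \<phi>_def
    by (intro mult_strict_mono) simp_all
  then have "t2 * t2 < T * T" by simp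
  ultimately show False by (simp add: algebra_simps)
qed

lemma folded_ribbon_regular:
  assumes "0 < w" "(w / 2) / sin (pi / real n) < tan (pi / real n)"
  shows "folded_ribbon n (regular_vertex n) w"
  unfolding folded_ribbon_def
proof (intro conjI allI impI \<open>0 < w\<close>)
  fix i j assume ij: "i < n" "j < n" "i \<noteq> j"
  show "fold_line n (regular_vertex n) w i \<inter> fold_line n (regular_vertex n) w j = {}"
  proof (rule equals0I)
    fix z assume "z \<in> fold_line n (regular_vertex n) w i \<inter> fold_line n (regular_vertex n) w j"
    then obtain t1 t2 where "z = regular_vertex n i * (1 + \<i> * of_real t1)"
      "\<bar>t2\<bar> \<le> (w / 2) / sin (pi / real n)" "z = regular_vertex n j * (1 + \<i> * of_real t2)"
      using fold_line_regular_point \<open>0 < w\<close> by (metis IntE less_imp_le)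
    then show False using regular_tangents_apart[OF ij, of t2 t1] assms(2) by simp
  qed
qed

lemma polygon_length_regular: "polygon_length n (regular_vertex n) = real n * (2 * sin (pi / real n))"
  unfolding polygon_length_def edge_regular
  using sin_cos_pi_div_n_pos by (simp add: norm_mult)

lemma regular_ribbonlength_approaches:
  assumes "0 < \<epsilon>"
  obtains w where "folded_ribbon n (regular_vertex n) w"
    "ribbonlength n (regular_vertex n) w < real n * cot (pi / real n) + \<epsilon>"
proof -
  define \<phi> C where "\<phi> = pi / real n" and "C = real n * cot \<phi>"
  have "0 < sin \<phi>" "0 < cos \<phi>" unfolding \<phi>_def using sin_cos_pi_div_n_pos by simp_all
  then have "0 < C" "C * tan \<phi> = real n" unfolding C_def cot_def tan_def using n by simp_all
  define D where "D = C + \<epsilon> / 2"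
  have "0 < D" "C < D" unfolding D_def using \<open>0 < C\<close> \<open>0 < \<epsilon>\<close> by simp_all
  define w where "w = 2 * sin \<phi> * (real n / D)"
  have "0 < w" unfolding w_def using \<open>0 < sin \<phi>\<close> \<open>0 < D\<close> n by simp
  have "(w / 2) / sin \<phi> = real n / D" unfolding w_def using \<open>0 < sin \<phi>\<close> by simp
  also have "\<dots> < real n / C" using \<open>0 < C\<close> \<open>C < D\<close> n by (intro divide_strict_left_mono) auto
  also have "\<dots> = tan \<phi>" using \<open>C * tan \<phi> = real n\<close> \<open>0 < C\<close> by (simp add: field_simps)
  finally have "folded_ribbon n (regular_vertex n) w"
    using folded_ribbon_regular \<open>0 < w\<close> unfolding \<phi>_def by simp
  moreover have "ribbonlength n (regular_vertex n) w = D"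
    unfolding ribbonlength_def polygon_length_regular w_def \<phi>_def[symmetric]
    using \<open>0 < sin \<phi>\<close> \<open>0 < D\<close> n by simp
  moreover have "D < real n * cot (pi / real n) + \<epsilon>"
    unfolding D_def C_def \<phi>_def using \<open>0 < \<epsilon>\<close> by simp
  ultimately show thesis using that by simp
qed

end

theorem theorem6p5:
  fixes n :: nat
  assumes "n \<ge> 4"
  shows "(\<forall>(P :: nat \<Rightarrow> complex) (w :: real).
            nondegenerate_polygon n P \<and> simple_polygon n P \<and>
            (\<forall>i<n. pi / 2 \<le> interior_angle n P i \<and> interior_angle n P i < pi) \<and>
            folded_ribbon n P w
            \<longrightarrow> ribbonlength n P w \<ge> real n * cot (pi / real n))
       \<and> (\<forall>\<epsilon> > 0. \<exists>(P :: nat \<Rightarrow> complex) (w :: real).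
            regular_polygon n P \<and> folded_ribbon n P w \<and>
            ribbonlength n P w < real n * cot (pi / real n) + \<epsilon>)"
proof (intro conjI allI impI)
  fix P :: "nat \<Rightarrow> complex" and w :: real
  assume "nondegenerate_polygon n P \<and> simple_polygon n P \<and>
    (\<forall>i<n. pi / 2 \<le> interior_angle n P i \<and> interior_angle n P i < pi) \<and> folded_ribbon n P w"
  then show "ribbonlength n P w \<ge> real n * cot (pi / real n)"
    using ribbonlength_ge_n_cot[OF assms] by blast
next
  fix \<epsilon> :: real
  assume "\<epsilon> > 0"
  then obtain w where "folded_ribbon n (regular_vertex n) w"
    "ribbonlength n (regular_vertex n) w < real n * cot (pi / real n) + \<epsilon>"
    by (rule regular_ribbonlength_approaches[OF assms])
  then show "\<exists>(P :: nat \<Rightarrow> complex) (w :: real). regular_polygon n P \<and> folded_ribbon n P w \<and>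
      ribbonlength n P w < real n * cot (pi / real n) + \<epsilon>"
    using regular_polygon_regular_vertex by blast
qed

end
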